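(* Fix $0<p<1$, let $q=p^2+(1-p)^2$, $\phi=1_C$, $h^{(p)}_\varnothing=(1-p)1_{C_0}-p\,1_{C_2}$, and $e_\varnothing=h^{(p)}_\varnothing/\sqrt{p(1-p)}$. In the orthonormal basis $\{\phi,e_\varnothing\}$, the compression of $K_\infty$ to $\mathrm{span}\{\phi,e_\varnothing\}$ has matrix $$M(p)=\begin{pmatrix}\frac1{1-q}&\frac{(2p-1)\sqrt{p(1-p)}}{1-q}\\ \frac{(2p-1)\sqrt{p(1-p)}}{1-q}&1\end{pmatrix}.$$ In particular $\lambda_{\max}(K_\infty)\ge\lambda_{\max}(M(p))$, where $$\lambda_{\max}(M(p))=\frac12\Big(\frac1{1-q}+1\Big)+\frac12\sqrt{\Big(\frac1{1-q}-1\Big)^2+\frac{4(2p-1)^2p(1-p)}{(1-q)^2}}.$$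
   Context: Let $S_0(x)=x/3$, $S_2(x)=(x+2)/3$ on $[0,1]$ and let $C$ be the middle-third Cantor set. For $0<p<1$, $\mu_p$ is the unique Borel probability measure on $[0,1]$ with $\mu_p=p\,\mu_p\circ S_0^{-1}+(1-p)\,\mu_p\circ S_2^{-1}$. For words $w\in\{0,2\}^n$, $S_w=S_{w_1}\circ\cdots\circ S_{w_n}$, $C_w=S_w(C)$ (so $C_0=S_0(C)$, $C_2=S_2(C)$). Inner product $\langle f,g\rangle=\int\overline fg\,d\mu_p$. $K_mf=\sum_{|u|\le m}\langle1_{C_u},f\rangle1_{C_u}$, and $K_\infty=\lim_{m\to\infty}K_m$ in operator norm (this limit exists and is compact positive self-adjoint). $\lambda_{\max}(T)$ denotes the largest eigenvalue of a compact positive self-adjoint operator (or symmetric matrix) $T$. *)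

theory Defs
  imports "HOL-Analysis.Analysis" "HOL-Probability.Probability"
begin

definition Sd :: "nat \<Rightarrow> real \<Rightarrow> real" where
  "Sd d x = (x + real d) / 3"

definition Sw :: "nat list \<Rightarrow> real \<Rightarrow> real" where
  "Sw w = foldr (\<lambda>d g. Sd d \<circ> g) w id"

definition words_eq :: "nat \<Rightarrow> nat list set" where
  "words_eq n = {w. length w = n \<and> set w \<subseteq> {0, 2}}"

definition words_le :: "nat \<Rightarrow> nat list set" where
  "words_le m = {w. length w \<le> m \<and> set w \<subseteq> {0, 2}}"

definition cantor :: "real set" where
  "cantor = (\<Inter>n. \<Union>w\<in>words_eq n. Sw w ` {0..1})"

definition Cw :: "nat list \<Rightarrow> real set" where
  "Cw w = Sw w ` cantor"

definition mu :: "real \<Rightarrow> real measure" where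
  "mu p = (THE M. sets M = sets borel \<and> prob_space M \<and> emeasure M {0..1} = 1 \<and>
      (\<forall>A\<in>sets borel. emeasure M A =
          ennreal p * emeasure M (Sd 0 -` A) + ennreal (1 - p) * emeasure M (Sd 2 -` A)))"

definition inner_mu :: "real \<Rightarrow> (real \<Rightarrow> complex) \<Rightarrow> (real \<Rightarrow> complex) \<Rightarrow> complex" where
  "inner_mu p f g = (\<integral>x. cnj (f x) * g x \<partial>mu p)"

definition L2 :: "real \<Rightarrow> (real \<Rightarrow> complex) \<Rightarrow> bool" where
  "L2 p f \<longleftrightarrow> f \<in> borel_measurable (mu p) \<and> integrable (mu p) (\<lambda>x. (cmod (f x))\<^sup>2)"

definition L2norm :: "real \<Rightarrow> (real \<Rightarrow> complex) \<Rightarrow> real" where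
  "L2norm p f = sqrt (\<integral>x. (cmod (f x))\<^sup>2 \<partial>mu p)"

definition ind :: "real set \<Rightarrow> real \<Rightarrow> complex" where
  "ind A = indicator A"

definition Km :: "real \<Rightarrow> nat \<Rightarrow> (real \<Rightarrow> complex) \<Rightarrow> (real \<Rightarrow> complex)" where
  "Km p m f = (\<lambda>x. \<Sum>u\<in>words_le m. inner_mu p (ind (Cw u)) f * ind (Cw u) x)"

definition is_K_inf :: "real \<Rightarrow> ((real \<Rightarrow> complex) \<Rightarrow> (real \<Rightarrow> complex)) \<Rightarrow> bool" where
  "is_K_inf p T \<longleftrightarrow> (\<forall>f. L2 p f \<longrightarrow> L2 p (T f)) \<and>
     (\<forall>\<epsilon>>0. \<exists>N. \<forall>m\<ge>N. \<forall>f. L2 p f \<longrightarrow>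
        L2norm p (\<lambda>x. Km p m f x - T f x) \<le> \<epsilon> * L2norm p f)"

definition K_inf :: "real \<Rightarrow> (real \<Rightarrow> complex) \<Rightarrow> (real \<Rightarrow> complex)" where
  "K_inf p = (SOME T. is_K_inf p T)"

definition lam_max_op :: "real \<Rightarrow> ((real \<Rightarrow> complex) \<Rightarrow> (real \<Rightarrow> complex)) \<Rightarrow> real" where
  "lam_max_op p T = (GREATEST l::real. \<exists>f. L2 p f \<and> L2norm p f \<noteq> 0 \<and>
        (AE x in mu p. T f x = complex_of_real l * f x))"

definition lam_max_mat :: "real^2^2 \<Rightarrow> real" where
  "lam_max_mat M = (GREATEST l::real. \<exists>v::real^2. v \<noteq> 0 \<and> M *v v = l *\<^sub>R v)"

definition Mp :: "real \<Rightarrow> real^2^2" where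
  "Mp p = (let q = p\<^sup>2 + (1 - p)\<^sup>2 in
     (\<chi> i j. if i = 1 \<and> j = 1 then 1 / (1 - q)
             else if i = 2 \<and> j = 2 then 1
             else (2 * p - 1) * sqrt (p * (1 - p)) / (1 - q)))"

end

(*
  mu_p is the law of the sum of d_i 3^-(i+1) over independent digits d_i that equal 0 with
  probability p and 2 otherwise; it is the only solution of the self-similarity equation because
  the difference G of two distribution functions satisfies G a = p G (3a) + (1-p) G (3a-2),
  which contracts by the factor max(p, 1-p).

  The cylinder coefficients satisfy
    |<1_{C_u}, f>| <= mu(C_u)^(1/2) ||f|| <= max(p, 1-p)^(|u|/2) ||f||,
  so the series of the <1_{C_u}, f> 1_{C_u} over all words u converges uniformly; its sum agrees
  with K_oo f almost everywhere, and <g, K_oo f> is the sum over all u of the products of the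
  conjugated coefficients of g with those of f. The coefficients of phi and e are explicit
  multiples of word weights, so the four entries of the compression are geometric series in q.

  The largest eigenvalue of K_oo is the supremum s of its Rayleigh quotient. Along a maximising
  sequence of unit vectors, ||K_oo f - s f||^2 <= s (s - <f, K_oo f>) tends to 0; a diagonal
  subsequence has pointwise convergent coefficients, hence uniformly convergent series, and the
  limit is an eigenfunction for s. Testing the Rayleigh quotient on the top eigenvector of M(p)
  in span{phi, e} gives s >= lambda_max(M(p)).
*)

theory Submission
  imports Defs "HOL-Library.Diagonal_Subsequence"
begin

section \<open>The self-similar measure\<close>

text \<open>Under \<open>bernoulli_pmf p\<close> the value \<open>True\<close> has probability \<open>p\<close>; it codes the digit 0.\<close>

definition digit_of :: "bool \<Rightarrow> nat" where
  "digit_of b = (if b then 0 else 2)"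

definition coding_map :: "bool stream \<Rightarrow> real" where
  "coding_map \<omega> = (\<Sum>i. real (digit_of (\<omega> !! i)) / 3 ^ Suc i)"

lemma summable_coding_map: "summable (\<lambda>i. real (digit_of (\<omega> !! i)) / 3 ^ Suc i)"
proof (rule summable_comparison_test')
  show "summable (\<lambda>i. 2 * (1/3::real) ^ Suc i)"
    by (intro summable_mult summable_ignore_initial_segment[where k=1, simplified]
          complete_algebra_summable_geometric) auto
  show "norm (real (digit_of (\<omega> !! i)) / 3 ^ Suc i) \<le> 2 * (1/3) ^ Suc i" for i
    by (auto simp: digit_of_def power_divide)
qed

lemma coding_map_bounds: "0 \<le> coding_map \<omega>" "coding_map \<omega> \<le> 1"
proof -
  show "0 \<le> coding_map \<omega>"
    unfolding coding_map_def by (rule suminf_nonneg[OF summable_coding_map]) auto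
  have geom: "(\<lambda>i. (2/3) * (1/3::real) ^ i) sums ((2/3) * (1 / (1 - 1/3)))"
    by (intro sums_mult geometric_sums) simp
  have "coding_map \<omega> \<le> (\<Sum>i. (2/3) * (1/3::real) ^ i)"
    unfolding coding_map_def
    by (rule suminf_le[OF _ summable_coding_map sums_summable[OF geom]])
       (auto simp: digit_of_def power_divide)
  also have "\<dots> = 1" using sums_unique[OF geom] by simp
  finally show "coding_map \<omega> \<le> 1" .
qed

lemma coding_map_SCons: "coding_map (b ## \<omega>) = Sd (digit_of b) (coding_map \<omega>)"
proof -
  have "coding_map (b ## \<omega>) =
      real (digit_of b) / 3 + (\<Sum>i. real (digit_of ((b ## \<omega>) !! Suc i)) / 3 ^ Suc (Suc i))"
    unfolding coding_map_def using suminf_split_head[OF summable_coding_map[of "b ## \<omega>"]] by simp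
  also have "(\<Sum>i. real (digit_of ((b ## \<omega>) !! Suc i)) / 3 ^ Suc (Suc i))
      = (\<Sum>i. (1/3) * (real (digit_of (\<omega> !! i)) / 3 ^ Suc i))"
    by simp
  also have "\<dots> = (1/3) * coding_map \<omega>"
    unfolding coding_map_def by (rule suminf_mult[OF summable_coding_map])
  finally show ?thesis by (simp add: Sd_def add_divide_distrib)
qed

lemma coding_map_measurable: "coding_map \<in> borel_measurable (stream_space (measure_pmf B))"
  unfolding coding_map_def
proof (intro borel_measurable_suminf)
  fix i
  have "(\<lambda>b. real (digit_of b) / 3 ^ Suc i) \<in> borel_measurable (measure_pmf B)" by simp
  then show "(\<lambda>x. real (digit_of (x !! i)) / 3 ^ Suc i)
      \<in> borel_measurable (stream_space (measure_pmf B))"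
    using measurable_compose[OF measurable_snth] by blast
qed

lemma Sd_measurable[measurable]: "Sd d \<in> borel_measurable borel"
  unfolding Sd_def by measurable

definition self_similar :: "real \<Rightarrow> real measure \<Rightarrow> bool" where
  "self_similar p M \<longleftrightarrow> sets M = sets borel \<and> prob_space M \<and> emeasure M {0..1} = 1 \<and>
      (\<forall>A\<in>sets borel. emeasure M A =
          ennreal p * emeasure M (Sd 0 -` A) + ennreal (1 - p) * emeasure M (Sd 2 -` A))"

definition coding_measure :: "real \<Rightarrow> real measure" where
  "coding_measure p = distr (stream_space (measure_pmf (bernoulli_pmf p))) borel coding_map"

lemma self_similar_coding_measure:
  assumes "0 \<le> p" "p \<le> 1"
  shows "self_similar p (coding_measure p)"
proof -
  let ?B = "measure_pmf (bernoulli_pmf p)"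
  let ?S = "stream_space ?B"
  interpret S: prob_space ?S
    by (rule prob_space.prob_space_stream_space) (rule prob_space_measure_pmf)
  have meas: "coding_map \<in> ?S \<rightarrow>\<^sub>M borel" by (rule coding_map_measurable)
  have space: "space ?S = UNIV" by (simp add: space_stream_space streams_UNIV)
  have unit: "emeasure (coding_measure p) {0..1} = 1"
    unfolding coding_measure_def using coding_map_bounds
    by (subst emeasure_distr[OF meas])
       (auto simp: space S.emeasure_space_1[simplified space] vimage_def)
  have "emeasure (coding_measure p) A =
      ennreal p * emeasure (coding_measure p) (Sd 0 -` A)
      + ennreal (1 - p) * emeasure (coding_measure p) (Sd 2 -` A)"
    if A: "A \<in> sets borel" for A
  proof -
    have "emeasure (coding_measure p) A = emeasure ?S (coding_map -` A \<inter> space ?S)"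
      unfolding coding_measure_def by (rule emeasure_distr[OF meas A])
    also have "\<dots> = \<integral>\<^sup>+ t. emeasure ?S {x \<in> space ?S. t ## x \<in> coding_map -` A \<inter> space ?S} \<partial>?B"
      by (rule prob_space.emeasure_stream_space[OF prob_space_measure_pmf]) (use meas A in simp)
    also have "\<dots> = \<integral>\<^sup>+ t. emeasure (coding_measure p) (Sd (digit_of t) -` A) \<partial>?B"
    proof (rule nn_integral_cong)
      fix t
      have "{x \<in> space ?S. t ## x \<in> coding_map -` A \<inter> space ?S}
          = coding_map -` (Sd (digit_of t) -` A) \<inter> space ?S"
        by (auto simp: space coding_map_SCons)
      moreover have "Sd (digit_of t) -` A \<in> sets borel"
        using measurable_sets_borel[OF Sd_measurable A] by simp
      ultimately show "emeasure ?S {x \<in> space ?S. t ## x \<in> coding_map -` A \<inter> space ?S}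
          = emeasure (coding_measure p) (Sd (digit_of t) -` A)"
        unfolding coding_measure_def by (simp add: emeasure_distr[OF meas])
    qed
    also have "\<dots> = ennreal p * emeasure (coding_measure p) (Sd 0 -` A)
        + ennreal (1 - p) * emeasure (coding_measure p) (Sd 2 -` A)"
      using assms by (subst nn_integral_bernoulli_pmf) (auto simp: digit_of_def mult.commute)
    finally show ?thesis .
  qed
  moreover have "prob_space (coding_measure p)"
    unfolding coding_measure_def by (rule S.prob_space_distr[OF meas])
  ultimately show ?thesis
    unfolding self_similar_def using unit by (simp add: coding_measure_def)
qed

lemma measure_self_similar:
  assumes M: "self_similar p M" and p: "0 < p" "p < 1" and A: "A \<in> sets borel"
  shows "measure M A = p * measure M (Sd 0 -` A) + (1 - p) * measure M (Sd 2 -` A)"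
proof -
  interpret prob_space M using M by (simp add: self_similar_def)
  have "ennreal (measure M A)
      = ennreal p * ennreal (measure M (Sd 0 -` A))
        + ennreal (1-p) * ennreal (measure M (Sd 2 -` A))"
    using M A by (simp add: self_similar_def emeasure_eq_measure)
  also have "\<dots> = ennreal (p * measure M (Sd 0 -` A) + (1-p) * measure M (Sd 2 -` A))"
    using p by (simp add: ennreal_mult'' ennreal_plus)
  finally show ?thesis by (subst (asm) ennreal_inj) (use p in auto)
qed

lemma self_similar_cdf:
  assumes M: "self_similar p M" and p: "0 < p" "p < 1"
  shows "a < 0 \<Longrightarrow> measure M {..a} = 0"
    and "1 \<le> a \<Longrightarrow> measure M {..a} = 1"
    and "measure M {..a} = p * measure M {..3*a} + (1-p) * measure M {..3*a-2}"
proof -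
  have sets: "sets M = sets borel" and unit: "emeasure M {0..1} = 1"
    using M unfolding self_similar_def by auto
  interpret prob_space M using M by (simp add: self_similar_def)
  have unit': "measure M {0..1} = 1" using unit by (simp add: emeasure_eq_measure)
  show "measure M {..a} = 0" if "a < 0"
  proof -
    have "measure M {..a} \<le> measure M (space M - {0..1})"
      using that sets by (intro finite_measure_mono) (auto simp: sets_eq_imp_space_eq[OF sets])
    also have "\<dots> = 0" using prob_compl[of "{0..1}"] unit' sets by simp
    finally show ?thesis using measure_nonneg[of M "{..a}"] by linarith
  qed
  show "measure M {..a} = 1" if "1 \<le> a"
  proof -
    have "measure M {0..1} \<le> measure M {..a}"
      using that by (intro finite_measure_mono) (auto simp: sets)
    then show ?thesis using unit' prob_le_1[of "{..a}"] by linarith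
  qed
  have "Sd 0 -` {..a} = {..3*a}" "Sd 2 -` {..a} = {..3*a-2}" by (auto simp: Sd_def)
  then show "measure M {..a} = p * measure M {..3*a} + (1-p) * measure M {..3*a-2}"
    using measure_self_similar[OF M p, of "{..a}"] by simp
qed

lemma self_similar_unique:
  assumes M: "self_similar p M" and N: "self_similar p N" and p: "0 < p" "p < 1"
  shows "M = N"
proof -
  define G where "G a = measure M {..a} - measure N {..a}" for a
  define r where "r = max p (1 - p)"
  have r: "0 \<le> r" "r < 1" using p by (auto simp: r_def)
  note cdfM = self_similar_cdf[OF M p] and cdfN = self_similar_cdf[OF N p]
  have G_outside: "G a = 0" if "a < 0 \<or> 1 \<le> a" for a
    using that cdfM(1,2) cdfN(1,2) by (auto simp: G_def)
  have G_rec: "G a = p * G (3*a) + (1-p) * G (3*a-2)" for a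
    using cdfM(3)[of a] cdfN(3)[of a] by (simp add: G_def algebra_simps)
  \<comment> \<open>On \<open>[0,1)\<close> at most one term of the recursion is nonzero, so the bound contracts.\<close>
  have G_bound: "\<bar>G a\<bar> \<le> r ^ n" for n a
  proof (induction n arbitrary: a)
    case 0
    interpret M: prob_space M using M by (simp add: self_similar_def)
    interpret N: prob_space N using N by (simp add: self_similar_def)
    show ?case unfolding G_def abs_le_iff power_0
      using M.prob_le_1[of "{..a}"] N.prob_le_1[of "{..a}"]
        measure_nonneg[of M "{..a}"] measure_nonneg[of N "{..a}"] by linarith
  next
    case (Suc n)
    consider "a < 0 \<or> 1 \<le> a" | "0 \<le> a" "a < 1/3" | "1/3 \<le> a" "a < 2/3" | "2/3 \<le> a" "a < 1"
      by linarith
    then show ?case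
    proof cases
      case 1 then show ?thesis using G_outside r by simp
    next
      case 2
      then have "G a = p * G (3*a)" using G_rec[of a] G_outside[of "3*a-2"] by simp
      moreover have "p * \<bar>G (3*a)\<bar> \<le> r * r ^ n"
        using Suc p r by (intro mult_mono) (auto simp: r_def)
      ultimately show ?thesis using p by (simp add: abs_mult)
    next
      case 3
      then have "G a = 0" using G_rec[of a] G_outside[of "3*a-2"] G_outside[of "3*a"] by simp
      then show ?thesis using r by simp
    next
      case 4
      then have "G a = (1-p) * G (3*a-2)" using G_rec[of a] G_outside[of "3*a"] by simp
      moreover have "(1-p) * \<bar>G (3*a-2)\<bar> \<le> r * r ^ n"
        using Suc p r by (intro mult_mono) (auto simp: r_def)
      ultimately show ?thesis using p by (simp add: abs_mult)
    qed
  qed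
  have "G a = 0" for a
  proof -
    have "(\<lambda>n. r ^ n) \<longlonglongrightarrow> 0" using r by (intro LIMSEQ_power_zero) auto
    then have "\<bar>G a\<bar> \<le> 0" using G_bound by (intro tendsto_lowerbound[of "\<lambda>n. r^n"]) auto
    then show ?thesis by simp
  qed
  then have "cdf M = cdf N" unfolding cdf_def G_def by (auto simp: fun_eq_iff)
  moreover have "real_distribution M" "real_distribution N"
    using M N unfolding self_similar_def real_distribution_def real_distribution_axioms_def by auto
  ultimately show ?thesis using cdf_unique by blast
qed

lemma self_similar_mu:
  assumes "0 < p" "p < 1"
  shows "self_similar p (mu p)"
proof -
  have "mu p = coding_measure p"
    unfolding mu_def self_similar_def[symmetric]
    using self_similar_coding_measure self_similar_unique assms by (intro the_equality) auto
  then show ?thesis using self_similar_coding_measure assms by simp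
qed

section \<open>Cantor cylinders\<close>

lemma Sw_Nil[simp]: "Sw [] = id" by (simp add: Sw_def)
lemma Sw_Cons[simp]: "Sw (d # w) = Sd d \<circ> Sw w" by (simp add: Sw_def)

lemma Sw_affine: "Sw w x = Sw w 0 + x / 3 ^ length w"
proof (induction w arbitrary: x)
  case (Cons d w)
  have "Sw (d # w) x = (Sw w x + real d) / 3" by (simp add: Sd_def)
  also have "\<dots> = (Sw w 0 + x / 3 ^ length w + real d) / 3" using Cons.IH[of x] by simp
  finally have A: "Sw (d # w) x = (Sw w 0 + x / 3 ^ length w + real d) / 3" .
  have B: "Sw (d # w) 0 = (Sw w 0 + real d) / 3" by (simp add: Sd_def)
  show ?case by (simp only: A B length_Cons power_Suc) (simp add: field_simps)
qed simp

lemma Sw_image_eq: "Sw w ` B = (\<lambda>y. (y - Sw w 0) * 3 ^ length w) -` B"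
proof -
  have "Sw w ((y - Sw w 0) * 3 ^ length w) = y" for y by (subst Sw_affine) simp
  moreover have "(Sw w x - Sw w 0) * 3 ^ length w = x" for x by (subst Sw_affine) simp
  ultimately show ?thesis by (auto intro!: image_eqI)
qed

lemma Sw_image_borel: "B \<in> sets borel \<Longrightarrow> Sw w ` B \<in> sets borel"
proof -
  have "continuous_on UNIV (\<lambda>y::real. (y - Sw w 0) * 3 ^ length w)" by (intro continuous_intros)
  then have "(\<lambda>y::real. (y - Sw w 0) * 3 ^ length w) \<in> borel_measurable borel"
    by (rule borel_measurable_continuous_onI)
  moreover assume "B \<in> sets borel"
  ultimately show ?thesis unfolding Sw_image_eq by (rule measurable_sets_borel)
qed

lemma words_eq_0: "words_eq 0 = {[]}" by (auto simp: words_eq_def)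

lemma words_eq_Suc: "words_eq (Suc n) = (\<lambda>w. 0 # w) ` words_eq n \<union> (\<lambda>w. 2 # w) ` words_eq n"
proof
  show "words_eq (Suc n) \<subseteq> (\<lambda>w. 0 # w) ` words_eq n \<union> (\<lambda>w. 2 # w) ` words_eq n"
  proof
    fix u assume "u \<in> words_eq (Suc n)"
    then obtain d w where "u = d # w" "length w = n" "d \<in> {0,2}" "set w \<subseteq> {0,2}"
      unfolding words_eq_def by (cases u) auto
    then show "u \<in> (\<lambda>w. 0 # w) ` words_eq n \<union> (\<lambda>w. 2 # w) ` words_eq n"
      by (auto simp: words_eq_def)
  qed
qed (auto simp: words_eq_def)

lemma finite_words_eq: "finite (words_eq n)"
  by (induction n) (auto simp: words_eq_0 words_eq_Suc)

lemma words_eq_set: "w \<in> words_eq n \<Longrightarrow> set w \<subseteq> {0,2}"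
  by (simp add: words_eq_def)

lemma words_le_eq: "words_le m = (\<Union>n\<le>m. words_eq n)"
  by (auto simp: words_le_def words_eq_def)

lemma sum_words_Suc:
  "(\<Sum>u\<in>words_eq (Suc n). f u) = (\<Sum>w\<in>words_eq n. f (0 # w)) + (\<Sum>w\<in>words_eq n. f (2 # w))"
proof -
  have "(\<Sum>u\<in>words_eq (Suc n). f u)
      = (\<Sum>u\<in>(\<lambda>w. 0 # w) ` words_eq n. f u) + (\<Sum>u\<in>(\<lambda>w. 2 # w) ` words_eq n. f u)"
    unfolding words_eq_Suc by (rule sum.union_disjoint) (auto simp: finite_words_eq)
  also have "\<dots> = (\<Sum>w\<in>words_eq n. f (0 # w)) + (\<Sum>w\<in>words_eq n. f (2 # w))"
    by (subst (1 2) sum.reindex) (auto simp: inj_on_def)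
  finally show ?thesis .
qed

lemma sum_words_le:
  "(\<Sum>u\<in>words_le m. f u) = (\<Sum>n\<le>m. \<Sum>u\<in>words_eq n. f u)"
  unfolding words_le_eq
proof (rule sum.UNION_disjoint)
  show "\<forall>i\<in>{..m}. \<forall>j\<in>{..m}. i \<noteq> j \<longrightarrow> words_eq i \<inter> words_eq j = {}"
    by (auto simp: words_eq_def)
qed (auto simp: finite_words_eq)

definition cantor_level :: "nat \<Rightarrow> real set" where
  "cantor_level n = (\<Union>w\<in>words_eq n. Sw w ` {0..1})"

lemma cantor_level_0: "cantor_level 0 = {0..1}" by (simp add: cantor_level_def words_eq_0)
lemma cantor_level_Suc: "cantor_level (Suc n) = Sd 0 ` cantor_level n \<union> Sd 2 ` cantor_level n"
  unfolding cantor_level_def words_eq_Suc by (auto simp: image_comp)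

lemma cantor_level_borel: "cantor_level n \<in> sets borel"
  unfolding cantor_level_def by (intro sets.finite_UN finite_words_eq Sw_image_borel) auto

lemma cantor_eq_INT_level: "cantor = (\<Inter>n. cantor_level n)"
  by (simp add: cantor_def cantor_level_def)

lemma cantor_borel: "cantor \<in> sets borel"
  unfolding cantor_eq_INT_level by (rule sets.countable_INT') (auto simp: cantor_level_borel)

lemma Cw_borel[measurable]: "Cw w \<in> sets borel"
  unfolding Cw_def by (intro Sw_image_borel cantor_borel)

lemma Sd_01: "d \<in> {0,2} \<Longrightarrow> x \<in> {0..1} \<Longrightarrow> Sd d x \<in> {0..1}"
  by (auto simp: Sd_def)

lemma cantor_level_01: "cantor_level n \<subseteq> {0..1}"
  by (induction n) (auto simp: cantor_level_0 cantor_level_Suc Sd_def)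

lemma cantor_01: "cantor \<subseteq> {0..1}" using cantor_level_01[of 0] unfolding cantor_eq_INT_level by auto

lemma Sd_cantor: "d \<in> {0,2} \<Longrightarrow> Sd d ` cantor \<subseteq> cantor"
proof
  fix y assume d: "d \<in> {0,2}" and "y \<in> Sd d ` cantor"
  then obtain x where x: "x \<in> cantor" "y = Sd d x" by auto
  have "y \<in> cantor_level n" for n
  proof (cases n)
    case 0 then show ?thesis using x cantor_01 Sd_01[OF d] by (auto simp: cantor_level_0)
  next
    case (Suc m)
    then show ?thesis using x d unfolding cantor_eq_INT_level by (auto simp: cantor_level_Suc)
  qed
  then show "y \<in> cantor" unfolding cantor_eq_INT_level by auto
qed

lemma Cw_Nil[simp]: "Cw [] = cantor" by (simp add: Cw_def)
lemma Cw_Cons: "Cw (d # w) = Sd d ` Cw w" by (simp add: Cw_def image_comp)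

lemma Cw_sub_cantor: "set w \<subseteq> {0,2} \<Longrightarrow> Cw w \<subseteq> cantor"
proof (induction w)
  case (Cons d w)
  then have "Sd d ` Cw w \<subseteq> Sd d ` cantor" by auto
  also have "\<dots> \<subseteq> cantor" using Cons.prems by (intro Sd_cantor) auto
  finally show ?case by (simp add: Cw_Cons)
qed simp

lemma Cw_01: "set w \<subseteq> {0,2} \<Longrightarrow> Cw w \<subseteq> {0..1}"
  using Cw_sub_cantor cantor_01 by blast

lemma Sd_inj: "inj (Sd d)" by (rule injI) (simp add: Sd_def)

lemma Cw_disjoint:
  "length u = length v \<Longrightarrow> set u \<subseteq> {0,2} \<Longrightarrow> set v \<subseteq> {0,2} \<Longrightarrow> u \<noteq> v \<Longrightarrow> Cw u \<inter> Cw v = {}"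
proof (induction u arbitrary: v)
  case Nil then show ?case by simp
next
  case (Cons d u)
  then obtain e v' where v: "v = e # v'" by (cases v) auto
  show ?case
  proof (cases "d = e")
    case True
    then have "u \<noteq> v'" using Cons.prems v by auto
    then have "Cw u \<inter> Cw v' = {}" using Cons.IH[of v'] Cons.prems v by simp
    moreover have "Cw (d # u) \<inter> Cw v = Sd d ` (Cw u \<inter> Cw v')"
      using image_Int[OF Sd_inj, of d "Cw u" "Cw v'"] True v by (simp add: Cw_Cons)
    ultimately show ?thesis by simp
  next
    case False
    have "set u \<subseteq> {0,2}" "set v' \<subseteq> {0,2}" using Cons.prems v by auto
    then have "Cw (d # u) \<subseteq> Sd d ` {0..1}" "Cw v \<subseteq> Sd e ` {0..1}"
      using Cw_01 unfolding v Cw_Cons by (metis image_mono)+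
    moreover have "Sd d ` {0..1} \<inter> Sd e ` {0..1} = {}"
      using False Cons.prems v by (auto simp: Sd_def)
    ultimately show ?thesis by blast
  qed
qed

lemma Cw_disjoint_eq: "u \<in> words_eq n \<Longrightarrow> v \<in> words_eq n \<Longrightarrow> u \<noteq> v \<Longrightarrow> Cw u \<inter> Cw v = {}"
  by (rule Cw_disjoint) (auto simp: words_eq_def)

lemma Cw_prefix: "set w \<subseteq> {0,2} \<Longrightarrow> Cw (u @ w) \<subseteq> Cw u"
proof (induction u)
  case Nil then show ?case using Cw_sub_cantor by simp
next
  case (Cons d u) then show ?case by (auto simp: Cw_Cons)
qed

lemma Sd_vimage_borel: "A \<in> sets borel \<Longrightarrow> Sd d -` A \<in> sets borel"
  using measurable_sets_borel[OF Sd_measurable] by simp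

fun word_weight :: "real \<Rightarrow> nat list \<Rightarrow> real" where
  "word_weight p [] = 1"
| "word_weight p (d # w) = (if d = 0 then p else 1 - p) * word_weight p w"

lemma word_weight_nonneg: "0 \<le> p \<Longrightarrow> p \<le> 1 \<Longrightarrow> 0 \<le> word_weight p u"
  by (induction u) auto

lemma word_weight_le: "0 \<le> p \<Longrightarrow> p \<le> 1 \<Longrightarrow> word_weight p u \<le> max p (1 - p) ^ length u"
proof (induction u)
  case (Cons d u)
  have "(if d = 0 then p else 1 - p) * word_weight p u \<le> max p (1 - p) * max p (1 - p) ^ length u"
    using Cons word_weight_nonneg[of p u] by (intro mult_mono) auto
  then show ?case by simp
qed simp

locale cantor_measure =
  fixes p :: real
  assumes p0: "0 < p" and p1: "p < 1"
begin

abbreviation "M \<equiv> mu p"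

lemma self_similar_M: "self_similar p M" by (rule self_similar_mu[OF p0 p1])

lemma sets_M[simp, measurable_cong]: "sets M = sets borel"
  using self_similar_M by (simp add: self_similar_def)
lemma space_M[simp]: "space M = UNIV" using sets_eq_imp_space_eq[OF sets_M] by simp
lemma prob_M: "prob_space M" using self_similar_M by (simp add: self_similar_def)

sublocale M: prob_space M by (rule prob_M)

lemma measure_01: "measure M {0..1} = 1"
  using self_similar_M by (simp add: self_similar_def M.emeasure_eq_measure)

lemma measure_outside_01: assumes "A \<in> sets borel" "A \<inter> {0..1} = {}" shows "measure M A = 0"
proof -
  have "A \<subseteq> space M - {0..1}" using assms by auto
  then have "measure M A \<le> measure M (space M - {0..1})"
    using assms by (intro M.finite_measure_mono) auto
  also have "\<dots> = 0" using M.prob_compl[of "{0..1}"] measure_01 by simp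
  finally show ?thesis using measure_nonneg[of M A] by linarith
qed

lemma measure_Sd_image:
  assumes B: "B \<in> sets borel" "B \<subseteq> {0..1}" and d: "d \<in> {0,2}"
  shows "measure M (Sd d ` B) = word_weight p [d] * measure M B"
proof -
  have SB: "Sd d ` B \<in> sets borel" using Sw_image_borel[OF B(1), of "[d]"] by simp
  have same: "Sd d -` (Sd d ` B) = B" using Sd_inj by (simp add: inj_vimage_image_eq)
  have other: "measure M (Sd e -` (Sd d ` B)) = 0" if "e \<in> {0,2}" "e \<noteq> d" for e
  proof (rule measure_outside_01)
    show "Sd e -` Sd d ` B \<in> sets borel" by (rule Sd_vimage_borel[OF SB])
    show "Sd e -` Sd d ` B \<inter> {0..1} = {}"
    proof (rule ccontr)
      assume "Sd e -` Sd d ` B \<inter> {0..1} \<noteq> {}"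
      then obtain x b where x: "x \<in> {0..1}" "b \<in> B" "Sd e x = Sd d b" by blast
      then have "b \<in> {0..1}" using B by auto
      then show False using x that d by (auto simp: Sd_def)
    qed
  qed
  show ?thesis
  proof (cases "d = 0")
    case True
    then show ?thesis
      using measure_self_similar[OF self_similar_M p0 p1 SB] same other[of 2] by simp
  next
    case False
    then have "d = 2" using d by auto
    then show ?thesis
      using measure_self_similar[OF self_similar_M p0 p1 SB] same other[of 0] by simp
  qed
qed

lemma measure_cantor_level: "measure M (cantor_level n) = 1"
proof (induction n)
  case 0 then show ?case using measure_01 by (simp add: cantor_level_0)
next
  case (Suc n)
  have "Sd 0 ` cantor_level n \<subseteq> {..1/3}" "Sd 2 ` cantor_level n \<subseteq> {2/3..}"
    using cantor_level_01[of n] by (auto simp: Sd_def)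
  then have disj: "Sd 0 ` cantor_level n \<inter> Sd 2 ` cantor_level n = {}" by fastforce
  have "measure M (cantor_level (Suc n))
      = measure M (Sd 0 ` cantor_level n) + measure M (Sd 2 ` cantor_level n)"
    unfolding cantor_level_Suc
    by (rule M.finite_measure_Union)
       (use Sw_image_borel[OF cantor_level_borel, of "[_]"] disj in auto)
  also have "\<dots> = p * 1 + (1-p) * 1"
    using measure_Sd_image[OF cantor_level_borel cantor_level_01, of 0 n]
      measure_Sd_image[OF cantor_level_borel cantor_level_01, of 2 n] Suc
    by simp
  finally show ?case by simp
qed

lemma measure_cantor: "measure M cantor = 1"
proof -
  have "UNIV - cantor_level n \<in> null_sets M" for n
    using M.prob_compl[of "cantor_level n"] measure_cantor_level[of n] cantor_level_borel[of n]
    by (simp add: null_sets_def M.emeasure_eq_measure)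
  then have "(\<Union>n. UNIV - cantor_level n) \<in> null_sets M" by (rule null_sets_UN)
  moreover have "(\<Union>n. UNIV - cantor_level n) = UNIV - cantor" by (auto simp: cantor_eq_INT_level)
  ultimately have "measure M (UNIV - cantor) = 0" by (simp add: null_sets_def M.emeasure_eq_measure)
  then show ?thesis using M.prob_compl[of cantor] cantor_borel by simp
qed

lemma measure_Cw: "set u \<subseteq> {0,2} \<Longrightarrow> measure M (Cw u) = word_weight p u"
proof (induction u)
  case Nil then show ?case using measure_cantor by simp
next
  case (Cons d u)
  then have "measure M (Cw (d # u)) = word_weight p [d] * measure M (Cw u)"
    unfolding Cw_Cons by (intro measure_Sd_image Cw_borel Cw_01) auto
  then show ?case using Cons by simp
qed

end

lemma quadratic_nonneg_discriminant_le:
  fixes a b c :: real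
  assumes nonneg: "\<And>t. 0 \<le> a - 2*b*t + c*t\<^sup>2" and "0 \<le> c"
  shows "b\<^sup>2 \<le> a * c"
proof (cases "c = 0")
  case True
  have "b = 0"
  proof (rule ccontr)
    assume "b \<noteq> 0"
    then have "a - 2*b*((a+1)/(2*b)) + c*((a+1)/(2*b))\<^sup>2 = -1" using True by (simp add: field_simps)
    then show False using nonneg[of "(a+1)/(2*b)"] by simp
  qed
  then show ?thesis using nonneg[of 0] True by simp
next
  case False
  then have c: "c > 0" using \<open>0 \<le> c\<close> by simp
  have "0 \<le> a - 2*b*(b/c) + c*(b/c)\<^sup>2" by (rule nonneg)
  also have "\<dots> = a - b\<^sup>2 / c" using c by (simp add: power2_eq_square field_simps)
  finally show ?thesis using c by (simp add: field_simps)
qed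

lemma mult_le_sum_squares: "a * b \<le> a\<^sup>2 + (b::real)\<^sup>2"
  using sum_squares_bound[of a b] zero_le_power2[of a] zero_le_power2[of b] by linarith

lemma integrable_mult_of_squares:
  fixes g h :: "'a \<Rightarrow> real"
  assumes "g \<in> borel_measurable M" "h \<in> borel_measurable M"
    and "integrable M (\<lambda>x. (g x)\<^sup>2)" "integrable M (\<lambda>x. (h x)\<^sup>2)"
  shows "integrable M (\<lambda>x. g x * h x)"
proof (rule Bochner_Integration.integrable_bound)
  show "integrable M (\<lambda>x. (g x)\<^sup>2 + (h x)\<^sup>2)" using assms by simp
  show "AE x in M. norm (g x * h x) \<le> norm ((g x)\<^sup>2 + (h x)\<^sup>2)"
    using mult_le_sum_squares[of "\<bar>g _\<bar>" "\<bar>h _\<bar>"] by (intro AE_I2) (simp add: abs_mult)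
qed (use assms in simp)

lemma integral_mult_square_le:
  fixes g h :: "'a \<Rightarrow> real"
  assumes "g \<in> borel_measurable M" "h \<in> borel_measurable M"
    and g2: "integrable M (\<lambda>x. (g x)\<^sup>2)" and h2: "integrable M (\<lambda>x. (h x)\<^sup>2)"
  shows "(\<integral>x. g x * h x \<partial>M)\<^sup>2 \<le> (\<integral>x. (g x)\<^sup>2 \<partial>M) * (\<integral>x. (h x)\<^sup>2 \<partial>M)"
proof (rule quadratic_nonneg_discriminant_le)
  show "0 \<le> (\<integral>x. (h x)\<^sup>2 \<partial>M)" by simp
  fix t :: real
  have gh: "integrable M (\<lambda>x. g x * h x)" by (rule integrable_mult_of_squares[OF assms])
  have "0 \<le> (\<integral>x. (g x - t * h x)\<^sup>2 \<partial>M)" by simp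
  also have "\<dots> = (\<integral>x. (g x)\<^sup>2 - 2 * t * (g x * h x) + t\<^sup>2 * (h x)\<^sup>2 \<partial>M)"
    by (simp add: power2_diff power_mult_distrib algebra_simps)
  also have "\<dots> = (\<integral>x. (g x)\<^sup>2 \<partial>M) - 2 * t * (\<integral>x. g x * h x \<partial>M) + t\<^sup>2 * (\<integral>x. (h x)\<^sup>2 \<partial>M)"
    using g2 gh h2 by simp
  finally show "0 \<le> (\<integral>x. (g x)\<^sup>2 \<partial>M) - 2 * (\<integral>x. g x * h x \<partial>M) * t + (\<integral>x. (h x)\<^sup>2 \<partial>M) * t\<^sup>2"
    by (simp add: algebra_simps)
qed

lemma integrable_bounded_mult:
  fixes g :: "'a \<Rightarrow> 'b::{real_normed_field, banach, second_countable_topology}"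
  assumes g: "integrable M g" and "h \<in> borel_measurable M" and bound: "\<And>x. norm (h x) \<le> B"
  shows "integrable M (\<lambda>x. h x * g x)"
proof (rule Bochner_Integration.integrable_bound)
  show "integrable M (\<lambda>x. B * norm (g x))" using g by simp
  show "(\<lambda>x. h x * g x) \<in> borel_measurable M" using assms borel_measurable_integrable[OF g] by simp
  show "AE x in M. norm (h x * g x) \<le> norm (B * norm (g x))"
    using bound by (intro AE_I2) (simp add: norm_mult mult_right_mono order_trans[OF _ abs_ge_self])
qed

lemma cnj_measurable[measurable]:
  "f \<in> borel_measurable N \<Longrightarrow> (\<lambda>x. cnj (f x)) \<in> borel_measurable N"
  using measurable_compose[of f N borel cnj borel]
  by (simp add: borel_measurable_continuous_onI continuous_on_cnj continuous_on_id)

context cantor_measure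
begin

definition sqnorm :: "(real \<Rightarrow> complex) \<Rightarrow> real" where
  "sqnorm f = (\<integral>x. (cmod (f x))\<^sup>2 \<partial>M)"

lemma L2norm_eq_sqrt_sqnorm: "L2norm p f = sqrt (sqnorm f)"
  by (simp add: L2norm_def sqnorm_def)

lemma sqnorm_nonneg: "0 \<le> sqnorm f"
  unfolding sqnorm_def by simp

lemma L2_measurable: "L2 p f \<Longrightarrow> f \<in> borel_measurable borel"
  unfolding L2_def using measurable_cong_sets[OF sets_M refl] by auto

lemma L2_integrable_square: "L2 p f \<Longrightarrow> integrable M (\<lambda>x. (cmod (f x))\<^sup>2)"
  by (simp add: L2_def)

lemma L2_integrable: assumes "L2 p f" shows "integrable M f"
proof -
  have "(\<lambda>x. cmod (f x)) \<in> borel_measurable M" using L2_measurable[OF assms] by simp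
  then have "integrable M (\<lambda>x. cmod (f x))"
    by (rule M.square_integrable_imp_integrable) (rule L2_integrable_square[OF assms])
  then show ?thesis using L2_measurable[OF assms] by (simp add: integrable_norm_iff)
qed

lemma L2_integrable_inner:
  assumes f: "L2 p f" and g: "L2 p g"
  shows "integrable M (\<lambda>x. cnj (f x) * g x)"
proof -
  have [measurable]: "f \<in> borel_measurable borel" "g \<in> borel_measurable borel"
    using f g by (auto dest: L2_measurable)
  have "integrable M (\<lambda>x. cmod (f x) * cmod (g x))"
    using L2_integrable_square[OF f] L2_integrable_square[OF g]
    by (intro integrable_mult_of_squares) auto
  moreover have "(\<lambda>x. cnj (f x) * g x) \<in> borel_measurable M" by measurable
  ultimately show ?thesis by (subst integrable_norm_iff[symmetric]) (simp_all add: norm_mult)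
qed

lemma L2_bounded:
  assumes "f \<in> borel_measurable borel" "\<And>x. cmod (f x) \<le> B"
  shows "L2 p f"
  unfolding L2_def
proof
  show "f \<in> borel_measurable M" using assms(1) by simp
  show "integrable M (\<lambda>x. (cmod (f x))\<^sup>2)"
  proof (rule Bochner_Integration.integrable_bound)
    show "integrable M (\<lambda>x. B\<^sup>2)" by simp
    show "AE x in M. norm ((cmod (f x))\<^sup>2) \<le> norm (B\<^sup>2)"
      using assms(2) by (intro AE_I2) (simp add: power_mono)
  qed (use assms(1) in simp)
qed

lemma L2_add: assumes f: "L2 p f" and g: "L2 p g" shows "L2 p (\<lambda>x. f x + g x)"
  unfolding L2_def
proof
  have [measurable]: "f \<in> borel_measurable borel" "g \<in> borel_measurable borel"
    using f g by (auto dest: L2_measurable)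
  show "(\<lambda>x. f x + g x) \<in> borel_measurable M" by measurable
  show "integrable M (\<lambda>x. (cmod (f x + g x))\<^sup>2)"
  proof (rule Bochner_Integration.integrable_bound)
    show "integrable M (\<lambda>x. 2 * (cmod (f x))\<^sup>2 + 2 * (cmod (g x))\<^sup>2)"
      using L2_integrable_square[OF f] L2_integrable_square[OF g] by simp
    have "(cmod (f x + g x))\<^sup>2 \<le> 2 * (cmod (f x))\<^sup>2 + 2 * (cmod (g x))\<^sup>2" for x
    proof -
      have "(cmod (f x + g x))\<^sup>2 \<le> (cmod (f x) + cmod (g x))\<^sup>2"
        by (simp add: power_mono norm_triangle_ineq)
      also have "\<dots> \<le> 2 * (cmod (f x))\<^sup>2 + 2 * (cmod (g x))\<^sup>2"
        using sum_squares_bound[of "cmod (f x)" "cmod (g x)"] by (simp add: power2_sum)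
      finally show ?thesis .
    qed
    then show "AE x in M. norm ((cmod (f x + g x))\<^sup>2)
        \<le> norm (2 * (cmod (f x))\<^sup>2 + 2 * (cmod (g x))\<^sup>2)"
      by (intro AE_I2) simp
  qed measurable
qed

lemma L2_scale: assumes f: "L2 p f" shows "L2 p (\<lambda>x. a * f x)"
  using f unfolding L2_def
  by (auto simp: norm_mult power_mult_distrib intro: borel_measurable_times)

lemma L2_diff: assumes f: "L2 p f" and g: "L2 p g" shows "L2 p (\<lambda>x. f x - g x)"
  using L2_add[OF f L2_scale[OF g, of "-1"]] by simp

lemma L2_indicator: "A \<in> sets borel \<Longrightarrow> L2 p (ind A)"
  by (rule L2_bounded[of _ 1]) (auto simp: ind_def indicator_def)

lemma integral_indicator_norm_le:
  assumes A: "A \<in> sets borel" and f: "L2 p f"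
  shows "(\<integral>x. indicator A x * cmod (f x) \<partial>M) \<le> sqrt (measure M A) * sqrt (sqnorm f)"
proof -
  have ind_sq: "(\<lambda>x. (indicator A x :: real)\<^sup>2) = indicator A"
    by (auto simp: indicator_def fun_eq_iff)
  have "integrable M (indicator A :: real \<Rightarrow> real)"
    using A M.emeasure_finite[of A]
    by (intro integrable_real_indicator) (simp_all add: less_top[symmetric])
  then have "(\<integral>x. indicator A x * cmod (f x) \<partial>M)\<^sup>2
      \<le> (\<integral>x. (indicator A x)\<^sup>2 \<partial>M) * (\<integral>x. (cmod (f x))\<^sup>2 \<partial>M)"
    using A L2_measurable[OF f] L2_integrable_square[OF f]
    by (intro integral_mult_square_le) (simp_all add: ind_sq)
  also have "\<dots> = measure M A * sqnorm f"
    using A by (simp add: ind_sq sqnorm_def)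
  finally show ?thesis unfolding real_sqrt_mult[symmetric] by (rule real_le_rsqrt)
qed

definition cyl_coeff :: "(real \<Rightarrow> complex) \<Rightarrow> nat list \<Rightarrow> complex" where
  "cyl_coeff f u = inner_mu p (ind (Cw u)) f"

lemma cyl_coeff_eq_integral: "cyl_coeff f u = (\<integral>x. indicator (Cw u) x * f x \<partial>M)"
  unfolding cyl_coeff_def inner_mu_def ind_def
  by (rule Bochner_Integration.integral_cong) (auto simp: indicator_def)

lemma cyl_coeff_bound:
  assumes "L2 p f"
  shows "cmod (cyl_coeff f u) \<le> sqrt (measure M (Cw u)) * sqrt (sqnorm f)"
proof -
  have "cmod (cyl_coeff f u) \<le> (\<integral>x. cmod (indicator (Cw u) x * f x) \<partial>M)"
    unfolding cyl_coeff_eq_integral by (rule integral_norm_bound)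
  also have "\<dots> = (\<integral>x. indicator (Cw u) x * cmod (f x) \<partial>M)"
    by (rule Bochner_Integration.integral_cong) (auto simp: indicator_def)
  also have "\<dots> \<le> sqrt (measure M (Cw u)) * sqrt (sqnorm f)"
    by (rule integral_indicator_norm_le[OF Cw_borel assms])
  finally show ?thesis .
qed

lemma cyl_coeff_le_norm: "L2 p f \<Longrightarrow> cmod (cyl_coeff f u) \<le> sqrt (sqnorm f)"
proof -
  assume "L2 p f"
  then have "cmod (cyl_coeff f u) \<le> sqrt (measure M (Cw u)) * sqrt (sqnorm f)"
    by (rule cyl_coeff_bound)
  also have "\<dots> \<le> 1 * sqrt (sqnorm f)"
    using M.prob_le_1[of "Cw u"] sqnorm_nonneg[of f] by (intro mult_right_mono) auto
  finally show ?thesis by simp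
qed

end

section \<open>The series form of \<open>K\<^sub>\<infinity>\<close>\<close>

lemma sum_indicator_level_le_1: "(\<Sum>u\<in>words_eq n. indicator (Cw u) x :: real) \<le> 1"
proof (cases "\<exists>u0\<in>words_eq n. x \<in> Cw u0")
  case True
  then obtain u0 where u0: "u0 \<in> words_eq n" "x \<in> Cw u0" by blast
  have "(\<Sum>u\<in>words_eq n. indicator (Cw u) x :: real) = (\<Sum>u\<in>words_eq n. if u = u0 then 1 else 0)"
    using Cw_disjoint_eq[OF _ u0(1)] u0(2) by (intro sum.cong) (auto simp: indicator_def)
  also have "\<dots> = 1" using u0(1) finite_words_eq by simp
  finally show ?thesis by simp
next
  case False
  then show ?thesis by (simp add: indicator_def)
qed

definition level_sum :: "(nat list \<Rightarrow> complex) \<Rightarrow> nat \<Rightarrow> real \<Rightarrow> complex" where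
  "level_sum a n x = (\<Sum>u\<in>words_eq n. a u * ind (Cw u) x)"

definition cylinder_series :: "(nat list \<Rightarrow> complex) \<Rightarrow> real \<Rightarrow> complex" where
  "cylinder_series a x = (\<Sum>n. level_sum a n x)"

lemma level_sum_measurable[measurable]: "level_sum a n \<in> borel_measurable borel"
  unfolding level_sum_def[abs_def] ind_def by measurable

lemma cylinder_series_measurable[measurable]: "cylinder_series a \<in> borel_measurable borel"
  unfolding cylinder_series_def[abs_def] by (intro borel_measurable_suminf level_sum_measurable)

lemma level_sum_add: "level_sum (\<lambda>u. a u + b u) n x = level_sum a n x + level_sum b n x"
  unfolding level_sum_def by (simp add: distrib_right sum.distrib)

lemma level_sum_scale: "level_sum (\<lambda>u. c * a u) n x = c * level_sum a n x"
  unfolding level_sum_def by (simp add: sum_distrib_left mult.assoc)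

text \<open>The level-\<open>n\<close> cylinders are disjoint, so at most one term of a level sum is nonzero.\<close>

lemma norm_level_sum_le:
  assumes "\<And>u. u \<in> words_eq n \<Longrightarrow> cmod (a u) \<le> C" and "0 \<le> C"
  shows "cmod (level_sum a n x) \<le> C"
proof -
  have "cmod (level_sum a n x) \<le> (\<Sum>u\<in>words_eq n. cmod (a u * ind (Cw u) x))"
    unfolding level_sum_def by (rule norm_sum)
  also have "\<dots> \<le> (\<Sum>u\<in>words_eq n. C * indicator (Cw u) x)"
    using assms by (intro sum_mono) (auto simp: ind_def indicator_def)
  also have "\<dots> = C * (\<Sum>u\<in>words_eq n. indicator (Cw u) x)" by (simp add: sum_distrib_left)
  also have "\<dots> \<le> C * 1" using sum_indicator_level_le_1 assms(2) by (intro mult_left_mono) auto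
  finally show ?thesis by simp
qed

context cantor_measure
begin

definition rho :: real where
  "rho = sqrt (max p (1 - p))"

lemma rho_bounds: "0 < rho" "rho < 1"
  using p0 p1 by (auto simp: rho_def)

lemma summable_rho_power: "summable (\<lambda>n. rho ^ n)"
  using rho_bounds by (intro summable_geometric) auto

definition decays :: "real \<Rightarrow> (nat list \<Rightarrow> complex) \<Rightarrow> bool" where
  "decays B a \<longleftrightarrow> (\<forall>n. \<forall>u\<in>words_eq n. cmod (a u) \<le> B * rho ^ n)"

lemma decays_nonneg: "decays B a \<Longrightarrow> 0 \<le> B"
proof -
  assume "decays B a"
  moreover have "[] \<in> words_eq 0" by (simp add: words_eq_def)
  ultimately have "cmod (a []) \<le> B" unfolding decays_def by fastforce
  then show "0 \<le> B" using norm_ge_zero order.trans by blast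
qed

lemma norm_level_sum_decays: "decays B a \<Longrightarrow> cmod (level_sum a n x) \<le> B * rho ^ n"
  using decays_nonneg[of B a] rho_bounds by (intro norm_level_sum_le) (auto simp: decays_def)

lemma summable_level_sum: "decays B a \<Longrightarrow> summable (\<lambda>n. level_sum a n x)"
  by (rule summable_comparison_test'[where g="\<lambda>n. B * rho ^ n"])
     (use rho_bounds in \<open>auto intro: summable_mult summable_rho_power norm_level_sum_decays\<close>)

lemma cylinder_series_tail_bound:
  assumes "decays B a"
  shows "cmod (cylinder_series a x - (\<Sum>n<m. level_sum a n x)) \<le> B * rho ^ m / (1 - rho)"
proof -
  have tail: "cylinder_series a x - (\<Sum>n<m. level_sum a n x) = (\<Sum>n. level_sum a (n + m) x)"
    unfolding cylinder_series_def
    using suminf_split_initial_segment[OF summable_level_sum[OF assms, of x], of m] by simp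
  have geom: "summable (\<lambda>n. B * rho ^ m * rho ^ n)" by (intro summable_mult summable_rho_power)
  have bound: "cmod (level_sum a (n + m) x) \<le> B * rho ^ m * rho ^ n" for n
    using norm_level_sum_decays[OF assms, of "n + m" x] by (simp add: power_add mult_ac)
  have summable_tail: "summable (\<lambda>n. cmod (level_sum a (n + m) x))"
    by (rule summable_comparison_test'[OF geom]) (use bound in auto)
  have "cmod (\<Sum>n. level_sum a (n + m) x) \<le> (\<Sum>n. cmod (level_sum a (n + m) x))"
    by (rule summable_norm[OF summable_tail])
  also have "\<dots> \<le> (\<Sum>n. B * rho ^ m * rho ^ n)" by (rule suminf_le[OF bound summable_tail geom])
  also have "\<dots> = B * rho ^ m / (1 - rho)"
    using rho_bounds by (simp add: suminf_mult[OF summable_rho_power] suminf_geometric)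
  finally show ?thesis using tail by simp
qed

lemma norm_cylinder_series_le: "decays B a \<Longrightarrow> cmod (cylinder_series a x) \<le> B / (1 - rho)"
  using cylinder_series_tail_bound[of B a x 0] by simp

lemma L2_cylinder_series: "decays B a \<Longrightarrow> L2 p (cylinder_series a)"
  by (rule L2_bounded[OF cylinder_series_measurable norm_cylinder_series_le])

lemma decays_add: "decays A a \<Longrightarrow> decays B b \<Longrightarrow> decays (A + B) (\<lambda>u. a u + b u)"
  unfolding decays_def distrib_right by (meson add_mono norm_triangle_le)

lemma decays_scale: "decays A a \<Longrightarrow> decays (cmod c * A) (\<lambda>u. c * a u)"
  unfolding decays_def by (auto simp: norm_mult mult.assoc intro: mult_left_mono)

lemma decays_diff: "decays A a \<Longrightarrow> decays B b \<Longrightarrow> decays (A + B) (\<lambda>u. a u - b u)"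
  using decays_add[of A a "cmod (-1) * B" "\<lambda>u. (-1) * b u"] decays_scale[of B b "-1"] by simp

lemma cylinder_series_add:
  "decays A a \<Longrightarrow> decays B b \<Longrightarrow>
    cylinder_series (\<lambda>u. a u + b u) x = cylinder_series a x + cylinder_series b x"
  unfolding cylinder_series_def level_sum_add
  by (rule suminf_add[symmetric]) (auto intro: summable_level_sum)

lemma cylinder_series_scale:
  "decays A a \<Longrightarrow> cylinder_series (\<lambda>u. c * a u) x = c * cylinder_series a x"
  unfolding cylinder_series_def level_sum_scale
  by (rule suminf_mult) (auto intro: summable_level_sum)

lemma cylinder_series_diff:
  "decays A a \<Longrightarrow> decays B b \<Longrightarrow>
    cylinder_series (\<lambda>u. a u - b u) x = cylinder_series a x - cylinder_series b x"
  using cylinder_series_add[of A a "cmod (-1) * B" "\<lambda>u. (-1) * b u" x] decays_scale[of B b "-1"]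
    cylinder_series_scale[of B b "-1" x]
  by simp

lemma decays_limit:
  assumes "\<And>k. decays B (a k)" and "\<And>u. (\<lambda>k. a k u) \<longlonglongrightarrow> A u"
  shows "decays B A"
  unfolding decays_def
proof (intro allI ballI)
  fix n u assume "u \<in> words_eq n"
  then have "\<forall>k. cmod (a k u) \<le> B * rho ^ n" using assms(1) unfolding decays_def by blast
  then show "cmod (A u) \<le> B * rho ^ n"
    by (intro LIMSEQ_le_const2[OF tendsto_norm[OF assms(2)]]) auto
qed

text \<open>The first \<open>m\<close> levels involve only finitely many coefficients, and the remaining
  levels are uniformly small.\<close>

lemma cylinder_series_uniform_limit:
  assumes decays: "\<And>k. decays B (a k)" and lim: "\<And>u. (\<lambda>k. a k u) \<longlonglongrightarrow> A u"
  shows "uniform_limit UNIV (\<lambda>k. cylinder_series (a k)) (cylinder_series A) sequentially"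
  unfolding uniform_limit_iff
proof (intro allI impI)
  fix e :: real assume e: "e > 0"
  have decays_A: "decays B A" by (rule decays_limit[OF assms])
  have "(\<lambda>m. (B + B) * rho ^ m / (1 - rho)) \<longlonglongrightarrow> (B + B) * 0 / (1 - rho)"
    using rho_bounds by (intro tendsto_intros LIMSEQ_power_zero) auto
  moreover have "e / 2 > 0" using e by simp
  ultimately have "\<forall>\<^sub>F m in sequentially. (B + B) * rho ^ m / (1 - rho) < e / 2"
    by (intro order_tendstoD(2)) auto
  then obtain m where m: "(B + B) * rho ^ m / (1 - rho) < e / 2"
    using eventually_sequentially by auto
  define S where "S k = (\<Sum>n<m. \<Sum>u\<in>words_eq n. cmod (a k u - A u))" for k
  have "S \<longlonglongrightarrow> (\<Sum>n<m. \<Sum>u\<in>words_eq n. 0)"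
    unfolding S_def using lim by (intro tendsto_intros tendsto_norm_zero) (simp add: LIM_zero)
  then have "S \<longlonglongrightarrow> 0" by simp
  moreover have "e / 2 > 0" using e by simp
  ultimately have "\<forall>\<^sub>F k in sequentially. S k < e / 2" by (rule order_tendstoD(2))
  then show "\<forall>\<^sub>F k in sequentially. \<forall>x\<in>UNIV.
      dist (cylinder_series (a k) x) (cylinder_series A x) < e"
  proof eventually_elim
    case (elim k)
    show ?case
    proof
      fix x
      let ?d = "\<lambda>u. a k u - A u"
      have decays_d: "decays (B + B) ?d" by (rule decays_diff[OF decays decays_A])
      have "cmod (\<Sum>n<m. level_sum ?d n x) \<le> (\<Sum>n<m. cmod (level_sum ?d n x))" by (rule norm_sum)
      also have "\<dots> \<le> S k"
        unfolding S_def
      proof (rule sum_mono)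
        fix n
        have "cmod (level_sum ?d n x) \<le> (\<Sum>u\<in>words_eq n. cmod (?d u * ind (Cw u) x))"
          unfolding level_sum_def by (rule norm_sum)
        also have "\<dots> \<le> (\<Sum>u\<in>words_eq n. cmod (?d u))"
          by (intro sum_mono) (auto simp: ind_def indicator_def)
        finally show "cmod (level_sum ?d n x) \<le> (\<Sum>u\<in>words_eq n. cmod (?d u))" .
      qed
      finally have head: "cmod (\<Sum>n<m. level_sum ?d n x) \<le> S k" .
      have tail: "cmod (cylinder_series ?d x - (\<Sum>n<m. level_sum ?d n x)) \<le> e / 2"
        using cylinder_series_tail_bound[OF decays_d, of x m] m by linarith
      have "cylinder_series (a k) x - cylinder_series A x
          = (\<Sum>n<m. level_sum ?d n x) + (cylinder_series ?d x - (\<Sum>n<m. level_sum ?d n x))"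
        using cylinder_series_diff[OF decays decays_A] by simp
      then have "cmod (cylinder_series (a k) x - cylinder_series A x) \<le> S k + e / 2"
        using norm_triangle_le[OF add_mono[OF head tail]] by simp
      then show "dist (cylinder_series (a k) x) (cylinder_series A x) < e"
        using elim by (simp add: dist_norm)
    qed
  qed
qed

definition K_series :: "(real \<Rightarrow> complex) \<Rightarrow> real \<Rightarrow> complex" where
  "K_series f = cylinder_series (cyl_coeff f)"

lemma decays_cyl_coeff: assumes f: "L2 p f" shows "decays (sqrt (sqnorm f)) (cyl_coeff f)"
  unfolding decays_def
proof (intro allI ballI)
  fix n u assume "u \<in> words_eq n"
  then have "set u \<subseteq> {0,2}" "length u = n" by (auto simp: words_eq_def)
  then have "sqrt (measure M (Cw u)) \<le> rho ^ n"
    using word_weight_le[of p u] p0 p1 by (simp add: measure_Cw rho_def real_sqrt_power[symmetric])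
  then show "cmod (cyl_coeff f u) \<le> sqrt (sqnorm f) * rho ^ n"
    using cyl_coeff_bound[OF f, of u]
    by (metis mult.commute mult_left_mono order_trans real_sqrt_ge_zero sqnorm_nonneg)
qed

lemma K_series_measurable[measurable]: "K_series f \<in> borel_measurable borel"
  unfolding K_series_def by simp

lemma L2_K_series: "L2 p f \<Longrightarrow> L2 p (K_series f)"
  unfolding K_series_def by (rule L2_cylinder_series[OF decays_cyl_coeff])

lemma norm_K_series_le: "L2 p f \<Longrightarrow> cmod (K_series f x) \<le> sqrt (sqnorm f) / (1 - rho)"
  unfolding K_series_def by (rule norm_cylinder_series_le[OF decays_cyl_coeff])

lemma integrable_indicator_mult: "L2 p f \<Longrightarrow> integrable M (\<lambda>x. indicator (Cw u) x * f x)"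
  by (rule integrable_bounded_mult[OF L2_integrable, of f "indicator (Cw u)" 1])
     (auto simp: indicator_def)

lemma cyl_coeff_add:
  "L2 p f \<Longrightarrow> L2 p g \<Longrightarrow> cyl_coeff (\<lambda>x. f x + g x) u = cyl_coeff f u + cyl_coeff g u"
  unfolding cyl_coeff_eq_integral by (simp add: distrib_left integrable_indicator_mult)

lemma cyl_coeff_scale: "cyl_coeff (\<lambda>x. c * f x) u = c * cyl_coeff f u"
  unfolding cyl_coeff_eq_integral by (simp add: mult.left_commute)

lemma cyl_coeff_diff:
  "L2 p f \<Longrightarrow> L2 p g \<Longrightarrow> cyl_coeff (\<lambda>x. f x - g x) u = cyl_coeff f u - cyl_coeff g u"
  unfolding cyl_coeff_eq_integral by (simp add: right_diff_distrib integrable_indicator_mult)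

lemma K_series_add:
  assumes f: "L2 p f" and g: "L2 p g"
  shows "K_series (\<lambda>x. f x + g x) x = K_series f x + K_series g x"
  unfolding K_series_def cyl_coeff_add[OF f g]
  by (rule cylinder_series_add[OF decays_cyl_coeff[OF f] decays_cyl_coeff[OF g]])

lemma K_series_scale: assumes f: "L2 p f" shows "K_series (\<lambda>x. c * f x) x = c * K_series f x"
  unfolding K_series_def cyl_coeff_scale by (rule cylinder_series_scale[OF decays_cyl_coeff[OF f]])

lemma K_series_diff:
  assumes f: "L2 p f" and g: "L2 p g"
  shows "K_series (\<lambda>x. f x - g x) x = K_series f x - K_series g x"
  unfolding K_series_def cyl_coeff_diff[OF f g]
  by (rule cylinder_series_diff[OF decays_cyl_coeff[OF f] decays_cyl_coeff[OF g]])

lemma Km_eq_partial_sum: "Km p m f x = (\<Sum>n<Suc m. level_sum (cyl_coeff f) n x)"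
  unfolding Km_def level_sum_def cyl_coeff_def sum_words_le lessThan_Suc_atMost ..

lemma sqnorm_le_bound:
  assumes "g \<in> borel_measurable borel" "\<And>x. cmod (g x) \<le> C"
  shows "sqnorm g \<le> C\<^sup>2"
proof -
  have "sqnorm g \<le> (\<integral>x. C\<^sup>2 \<partial>M)"
    unfolding sqnorm_def
  proof (rule integral_mono)
    show "integrable M (\<lambda>x. (cmod (g x))\<^sup>2)" using L2_bounded[OF assms] by (simp add: L2_def)
    show "(cmod (g x))\<^sup>2 \<le> C\<^sup>2" for x using assms(2)[of x] by (simp add: power_mono)
  qed simp
  then show ?thesis using M.prob_space by simp
qed

lemma is_K_inf_K_series: "is_K_inf p K_series"
  unfolding is_K_inf_def
proof (intro conjI allI impI)
  fix f assume "L2 p f" then show "L2 p (K_series f)" by (rule L2_K_series)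
next
  fix \<epsilon> :: real assume e: "\<epsilon> > 0"
  have "(\<lambda>n. rho ^ n) \<longlonglongrightarrow> 0" using rho_bounds by (intro LIMSEQ_power_zero) auto
  moreover have "\<epsilon> * (1 - rho) > 0" using e rho_bounds by simp
  ultimately obtain N where N: "\<And>n. n \<ge> N \<Longrightarrow> rho ^ n < \<epsilon> * (1 - rho)"
    using order_tendstoD(2) eventually_sequentially by metis
  show "\<exists>N. \<forall>m\<ge>N. \<forall>f. L2 p f \<longrightarrow> L2norm p (\<lambda>x. Km p m f x - K_series f x) \<le> \<epsilon> * L2norm p f"
  proof (intro exI allI impI)
    fix m f assume m: "N \<le> m" and f: "L2 p f"
    have "cmod (Km p m f x - K_series f x) \<le> \<epsilon> * sqrt (sqnorm f)" for x
    proof -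
      have "cmod (Km p m f x - K_series f x)
          = cmod (cylinder_series (cyl_coeff f) x - (\<Sum>n<Suc m. level_sum (cyl_coeff f) n x))"
        unfolding Km_eq_partial_sum K_series_def by (simp add: norm_minus_commute)
      also have "\<dots> \<le> sqrt (sqnorm f) * rho ^ Suc m / (1 - rho)"
        by (rule cylinder_series_tail_bound[OF decays_cyl_coeff[OF f]])
      also have "\<dots> \<le> sqrt (sqnorm f) * (\<epsilon> * (1 - rho)) / (1 - rho)"
        using N[of "Suc m"] m rho_bounds sqnorm_nonneg[of f]
        by (intro divide_right_mono mult_left_mono) auto
      also have "\<dots> = \<epsilon> * sqrt (sqnorm f)" using rho_bounds by simp
      finally show ?thesis .
    qed
    then have "sqnorm (\<lambda>x. Km p m f x - K_series f x) \<le> (\<epsilon> * sqrt (sqnorm f))\<^sup>2"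
      by (intro sqnorm_le_bound) (simp_all add: Km_eq_partial_sum)
    then have "sqrt (sqnorm (\<lambda>x. Km p m f x - K_series f x)) \<le> \<epsilon> * sqrt (sqnorm f)"
      using e by (simp add: real_le_lsqrt sqnorm_nonneg real_le_rsqrt)
    then show "L2norm p (\<lambda>x. Km p m f x - K_series f x) \<le> \<epsilon> * L2norm p f"
      by (simp add: L2norm_eq_sqrt_sqnorm)
  qed
qed

lemma sqnorm_diff_triangle:
  assumes a: "L2 p a" and b: "L2 p b" and c: "L2 p c"
  shows "sqnorm (\<lambda>x. a x - b x) \<le> 2 * sqnorm (\<lambda>x. a x - c x) + 2 * sqnorm (\<lambda>x. c x - b x)"
proof -
  have "sqnorm (\<lambda>x. a x - b x) \<le> (\<integral>x. 2 * (cmod (a x - c x))\<^sup>2 + 2 * (cmod (c x - b x))\<^sup>2 \<partial>M)"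
    unfolding sqnorm_def
  proof (rule integral_mono)
    show "integrable M (\<lambda>x. (cmod (a x - b x))\<^sup>2)" using L2_diff[OF a b] by (simp add: L2_def)
    show "integrable M (\<lambda>x. 2 * (cmod (a x - c x))\<^sup>2 + 2 * (cmod (c x - b x))\<^sup>2)"
      using L2_diff[OF a c] L2_diff[OF c b] by (simp add: L2_def)
    fix x
    have "(cmod (a x - b x))\<^sup>2 \<le> (cmod (a x - c x) + cmod (c x - b x))\<^sup>2"
      using norm_triangle_ineq[of "a x - c x" "c x - b x"] by (simp add: power_mono)
    also have "\<dots> \<le> 2 * (cmod (a x - c x))\<^sup>2 + 2 * (cmod (c x - b x))\<^sup>2"
      using sum_squares_bound[of "cmod (a x - c x)" "cmod (c x - b x)"] by (simp add: power2_sum)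
    finally show "(cmod (a x - b x))\<^sup>2 \<le> 2 * (cmod (a x - c x))\<^sup>2 + 2 * (cmod (c x - b x))\<^sup>2" .
  qed
  also have "\<dots> = 2 * sqnorm (\<lambda>x. a x - c x) + 2 * sqnorm (\<lambda>x. c x - b x)"
    unfolding sqnorm_def using L2_diff[OF a c] L2_diff[OF c b] by (simp add: L2_def)
  finally show ?thesis .
qed

lemma sqnorm_diff_commute: "sqnorm (\<lambda>x. a x - b x) = sqnorm (\<lambda>x. b x - a x)"
  unfolding sqnorm_def by (simp add: norm_minus_commute)

lemma sqnorm_le_if_L2norm_le:
  assumes "L2norm p g \<le> e * L2norm p f" "0 \<le> e"
  shows "sqnorm g \<le> e\<^sup>2 * sqnorm f"
proof -
  have "(sqrt (sqnorm g))\<^sup>2 \<le> (e * sqrt (sqnorm f))\<^sup>2"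
    using assms by (intro power_mono) (auto simp: sqnorm_nonneg L2norm_eq_sqrt_sqnorm)
  then show ?thesis using sqnorm_nonneg[of g] sqnorm_nonneg[of f] by (simp add: power_mult_distrib)
qed

lemma AE_zero_if_sqnorm_eq_0:
  assumes "L2 p g" "sqnorm g = 0"
  shows "AE x in M. g x = 0"
proof -
  have "AE x in M. (cmod (g x))\<^sup>2 = 0"
    using assms integral_nonneg_eq_0_iff_AE[OF L2_integrable_square[OF assms(1)]]
    by (simp add: sqnorm_def)
  then show ?thesis by eventually_elim simp
qed

lemma L2_Km: assumes f: "L2 p f" shows "L2 p (Km p m f)"
proof (rule L2_bounded)
  show "Km p m f \<in> borel_measurable borel" unfolding Km_eq_partial_sum[abs_def] by measurable
  fix x
  have "cmod (Km p m f x) \<le> (\<Sum>n<Suc m. cmod (level_sum (cyl_coeff f) n x))"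
    unfolding Km_eq_partial_sum by (rule norm_sum)
  also have "\<dots> \<le> (\<Sum>n<Suc m. sqrt (sqnorm f) * rho ^ n)"
    by (intro sum_mono norm_level_sum_decays[OF decays_cyl_coeff[OF f]])
  finally show "cmod (Km p m f x) \<le> (\<Sum>n<Suc m. sqrt (sqnorm f) * rho ^ n)" .
qed

lemma is_K_inf_AE_eq_K_series:
  assumes T: "is_K_inf p T" and f: "L2 p f"
  shows "AE x in M. T f x = K_series f x"
proof -
  have Tf: "L2 p (T f)" using T f unfolding is_K_inf_def by blast
  have Kf: "L2 p (K_series f)" by (rule L2_K_series[OF f])
  have bound: "sqnorm (\<lambda>x. T f x - K_series f x) \<le> 4 * e\<^sup>2 * sqnorm f" if e: "e > 0" for e
  proof -
    obtain N1 where N1: "\<forall>m\<ge>N1. \<forall>f. L2 p f \<longrightarrow>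
        L2norm p (\<lambda>x. Km p m f x - T f x) \<le> e * L2norm p f"
      using T e unfolding is_K_inf_def by blast
    obtain N2 where N2: "\<forall>m\<ge>N2. \<forall>f. L2 p f \<longrightarrow>
        L2norm p (\<lambda>x. Km p m f x - K_series f x) \<le> e * L2norm p f"
      using is_K_inf_K_series e unfolding is_K_inf_def by blast
    define m where "m = max N1 N2"
    have "sqnorm (\<lambda>x. T f x - K_series f x)
        \<le> 2 * sqnorm (\<lambda>x. T f x - Km p m f x) + 2 * sqnorm (\<lambda>x. Km p m f x - K_series f x)"
      by (rule sqnorm_diff_triangle[OF Tf Kf L2_Km[OF f]])
    also have "\<dots> \<le> 2 * (e\<^sup>2 * sqnorm f) + 2 * (e\<^sup>2 * sqnorm f)"
      unfolding sqnorm_diff_commute[of "T f" "Km p m f"] using N1 N2 f e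
      by (intro add_mono mult_left_mono sqnorm_le_if_L2norm_le) (auto simp: m_def)
    finally show ?thesis by (simp add: mult_ac)
  qed
  have "sqnorm (\<lambda>x. T f x - K_series f x) \<le> 0"
  proof (rule field_le_epsilon)
    fix d :: real assume d: "d > 0"
    define e where "e = sqrt (d / (4 * (sqnorm f + 1)))"
    have e0: "e > 0" using d sqnorm_nonneg[of f] by (simp add: e_def)
    have "4 * e\<^sup>2 * sqnorm f = d * (sqnorm f / (sqnorm f + 1))"
      using d sqnorm_nonneg[of f] by (simp add: e_def field_simps)
    also have "\<dots> \<le> d * 1" using d sqnorm_nonneg[of f] by (intro mult_left_mono) auto
    finally show "sqnorm (\<lambda>x. T f x - K_series f x) \<le> 0 + d" using bound[OF e0] by simp
  qed
  then have "AE x in M. T f x - K_series f x = 0"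
    using sqnorm_nonneg by (intro AE_zero_if_sqnorm_eq_0 L2_diff Tf Kf) (simp add: order_antisym)
  then show ?thesis by eventually_elim simp
qed

lemma is_K_inf_K_inf: "is_K_inf p (K_inf p)"
  unfolding K_inf_def by (rule someI[of "is_K_inf p", OF is_K_inf_K_series])

lemma L2_K_inf: "L2 p f \<Longrightarrow> L2 p (K_inf p f)"
  using is_K_inf_K_inf unfolding is_K_inf_def by blast

lemma K_inf_AE_eq_K_series: "L2 p f \<Longrightarrow> AE x in M. K_inf p f x = K_series f x"
  by (rule is_K_inf_AE_eq_K_series[OF is_K_inf_K_inf])

end

section \<open>The quadratic form of \<open>K\<^sub>\<infinity>\<close>\<close>

lemma cnj_mult_self: "cnj z * z = complex_of_real ((cmod z)\<^sup>2)"
  by (metis complex_norm_square mult.commute)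

lemma inner_mu_commute: "inner_mu p g f = cnj (inner_mu p f g)"
  unfolding inner_mu_def Bochner_Integration.integral_cnj[symmetric]
  by (rule Bochner_Integration.integral_cong) auto

context cantor_measure
begin

lemma inner_mu_self: "inner_mu p f f = of_real (sqnorm f)"
proof -
  have "inner_mu p f f = (\<integral>x. of_real ((cmod (f x))\<^sup>2) \<partial>M)"
    unfolding inner_mu_def by (simp add: cnj_mult_self)
  also have "\<dots> = of_real (sqnorm f)" unfolding sqnorm_def by (rule integral_complex_of_real)
  finally show ?thesis .
qed

lemma sqnorm_scale: "sqnorm (\<lambda>x. c * f x) = (cmod c)\<^sup>2 * sqnorm f"
  unfolding sqnorm_def by (simp add: norm_mult power_mult_distrib)

lemma integral_norm_le_sqrt_sqnorm: "L2 p g \<Longrightarrow> (\<integral>x. cmod (g x) \<partial>M) \<le> sqrt (sqnorm g)"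
  using integral_indicator_norm_le[of UNIV g] M.prob_space by simp

definition level_inner :: "(real \<Rightarrow> complex) \<Rightarrow> (real \<Rightarrow> complex) \<Rightarrow> nat \<Rightarrow> complex" where
  "level_inner g f n = (\<Sum>u\<in>words_eq n. cnj (cyl_coeff g u) * cyl_coeff f u)"

lemma L2_level_sum: "decays B a \<Longrightarrow> L2 p (level_sum a n)"
  by (rule L2_bounded[OF level_sum_measurable norm_level_sum_decays])

lemma inner_mu_level_sum:
  assumes g: "L2 p g"
  shows "inner_mu p g (level_sum a n) = (\<Sum>u\<in>words_eq n. a u * cnj (cyl_coeff g u))"
proof -
  have "inner_mu p g (level_sum a n) = (\<integral>x. (\<Sum>u\<in>words_eq n. a u * (cnj (g x) * ind (Cw u) x)) \<partial>M)"
    unfolding inner_mu_def level_sum_def by (simp add: sum_distrib_left mult_ac)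
  also have "\<dots> = (\<Sum>u\<in>words_eq n. a u * inner_mu p g (ind (Cw u)))"
    unfolding inner_mu_def
    by (subst Bochner_Integration.integral_sum)
       (simp_all add: L2_integrable_inner[OF g L2_indicator])
  also have "\<dots> = (\<Sum>u\<in>words_eq n. a u * cnj (cyl_coeff g u))"
    by (simp add: cyl_coeff_def inner_mu_commute[of p g])
  finally show ?thesis .
qed

lemma norm_partial_level_sums_le:
  assumes "decays B a"
  shows "cmod (\<Sum>n<m. level_sum a n x) \<le> B / (1 - rho)"
proof -
  have "cmod (\<Sum>n<m. level_sum a n x) \<le> (\<Sum>n<m. B * rho ^ n)"
    by (rule order_trans[OF norm_sum sum_mono[OF norm_level_sum_decays[OF assms]]])
  also have "\<dots> \<le> (\<Sum>n. B * rho ^ n)"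
    using decays_nonneg[OF assms] rho_bounds
    by (intro sum_le_suminf summable_mult summable_rho_power) auto
  also have "\<dots> = B / (1 - rho)"
    using rho_bounds by (simp add: suminf_mult[OF summable_rho_power] suminf_geometric)
  finally show ?thesis .
qed

lemma level_inner_sums:
  assumes g: "L2 p g" and f: "L2 p f"
  shows "level_inner g f sums inner_mu p g (K_series f)"
proof -
  let ?a = "cyl_coeff f" and ?B = "sqrt (sqnorm f)"
  have decays: "decays ?B ?a" by (rule decays_cyl_coeff[OF f])
  have [measurable]: "g \<in> borel_measurable borel" by (rule L2_measurable[OF g])
  have "(\<lambda>m. \<integral>x. cnj (g x) * (\<Sum>n<m. level_sum ?a n x) \<partial>M) \<longlonglongrightarrow> (\<integral>x. cnj (g x) * K_series f x \<partial>M)"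
  proof (rule integral_dominated_convergence)
    show "integrable M (\<lambda>x. cmod (g x) * (?B / (1 - rho)))"
      using integrable_norm[OF L2_integrable[OF g]] by simp
    show "AE x in M. (\<lambda>m. cnj (g x) * (\<Sum>n<m. level_sum ?a n x)) \<longlonglongrightarrow> cnj (g x) * K_series f x"
      unfolding K_series_def cylinder_series_def
      by (intro AE_I2 tendsto_mult_left summable_LIMSEQ summable_level_sum[OF decays])
    show "AE x in M. norm (cnj (g x) * (\<Sum>n<m. level_sum ?a n x))
        \<le> cmod (g x) * (?B / (1 - rho))" for m
      unfolding norm_mult complex_mod_cnj
      by (intro AE_I2 mult_left_mono norm_partial_level_sums_le[OF decays]) auto
  qed measurable
  moreover have "(\<integral>x. cnj (g x) * (\<Sum>n<m. level_sum ?a n x) \<partial>M) = (\<Sum>n<m. level_inner g f n)" for m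
  proof -
    have "(\<integral>x. cnj (g x) * (\<Sum>n<m. level_sum ?a n x) \<partial>M) = (\<Sum>n<m. inner_mu p g (level_sum ?a n))"
      unfolding inner_mu_def sum_distrib_left
      by (rule Bochner_Integration.integral_sum)
         (intro L2_integrable_inner g L2_level_sum[OF decays])
    then show ?thesis
      by (simp add: inner_mu_level_sum[OF g] level_inner_def mult.commute)
  qed
  ultimately show ?thesis unfolding sums_def inner_mu_def by simp
qed

definition K_form :: "(real \<Rightarrow> complex) \<Rightarrow> real" where
  "K_form f = Re (inner_mu p f (K_series f))"

definition level_energy :: "(real \<Rightarrow> complex) \<Rightarrow> nat \<Rightarrow> real" where
  "level_energy f n = (\<Sum>u\<in>words_eq n. (cmod (cyl_coeff f u))\<^sup>2)"

lemma level_inner_self: "level_inner f f n = of_real (level_energy f n)"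
  unfolding level_inner_def level_energy_def of_real_sum cnj_mult_self ..

lemma level_energy_sums:
  assumes f: "L2 p f"
  shows "level_energy f sums K_form f" and "inner_mu p f (K_series f) = of_real (K_form f)"
proof -
  have sums: "level_inner f f sums inner_mu p f (K_series f)" by (rule level_inner_sums[OF f f])
  from sums_Re[OF sums] show "level_energy f sums K_form f"
    unfolding K_form_def level_inner_self by simp
  have "(\<lambda>n. Im (level_inner f f n)) sums Im (inner_mu p f (K_series f))"
    using sums sums_complex_iff by blast
  then have "Im (inner_mu p f (K_series f)) = 0"
    unfolding level_inner_self using sums_unique[of "\<lambda>n. 0"] by (simp add: sums_0)
  then show "inner_mu p f (K_series f) = of_real (K_form f)"
    unfolding K_form_def by (simp add: complex_eq_iff)
qed

lemma K_form_nonneg: "L2 p f \<Longrightarrow> 0 \<le> K_form f"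
  using level_energy_sums(1) by (metis sums_le sums_zero sum_nonneg zero_le_power2 level_energy_def)

lemma K_form_scale: assumes f: "L2 p f" shows "K_form (\<lambda>x. c * f x) = (cmod c)\<^sup>2 * K_form f"
proof -
  have "level_energy (\<lambda>x. c * f x) = (\<lambda>n. (cmod c)\<^sup>2 * level_energy f n)"
    unfolding level_energy_def cyl_coeff_scale
    by (rule ext) (simp add: norm_mult power_mult_distrib sum_distrib_left)
  then have "level_energy (\<lambda>x. c * f x) sums ((cmod c)\<^sup>2 * K_form f)"
    using sums_mult[OF level_energy_sums(1)[OF f]] by simp
  then show ?thesis using level_energy_sums(1)[OF L2_scale[OF f]] sums_unique2 by blast
qed

lemma K_form_le: assumes f: "L2 p f" shows "K_form f \<le> sqnorm f / (1 - rho)"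
proof -
  have "K_form f \<le> cmod (inner_mu p f (K_series f))"
    unfolding K_form_def by (rule complex_Re_le_cmod)
  also have "\<dots> \<le> (\<integral>x. cmod (cnj (f x) * K_series f x) \<partial>M)"
    unfolding inner_mu_def by (rule integral_norm_bound)
  also have "\<dots> \<le> (\<integral>x. cmod (f x) * (sqrt (sqnorm f) / (1 - rho)) \<partial>M)"
  proof (rule integral_mono)
    show "integrable M (\<lambda>x. cmod (cnj (f x) * K_series f x))"
      by (intro integrable_norm L2_integrable_inner f L2_K_series)
    show "integrable M (\<lambda>x. cmod (f x) * (sqrt (sqnorm f) / (1 - rho)))"
      using integrable_norm[OF L2_integrable[OF f]] by simp
    show "cmod (cnj (f x) * K_series f x) \<le> cmod (f x) * (sqrt (sqnorm f) / (1 - rho))" for x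
      unfolding norm_mult complex_mod_cnj by (intro mult_left_mono norm_K_series_le f) auto
  qed
  also have "\<dots> = (\<integral>x. cmod (f x) \<partial>M) * (sqrt (sqnorm f) / (1 - rho))" by simp
  also have "\<dots> \<le> sqrt (sqnorm f) * (sqrt (sqnorm f) / (1 - rho))"
    using rho_bounds sqnorm_nonneg[of f]
    by (intro mult_right_mono integral_norm_le_sqrt_sqnorm f) auto
  also have "\<dots> = sqnorm f / (1 - rho)"
    using sqnorm_nonneg[of f] by (simp add: real_sqrt_mult[symmetric])
  finally show ?thesis .
qed

text \<open>By \<open>level_inner_sums\<close> the form is a sum of products of cylinder coefficients, so the
  Cauchy--Schwarz inequality for finite sums applies to its partial sums.\<close>

lemma inner_mu_K_series_Cauchy_Schwarz:
  assumes g: "L2 p g" and f: "L2 p f"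
  shows "(cmod (inner_mu p g (K_series f)))\<^sup>2 \<le> K_form g * K_form f"
proof -
  have partial: "(cmod (\<Sum>n<m. level_inner g f n))\<^sup>2
      \<le> (\<Sum>n<m. level_energy g n) * (\<Sum>n<m. level_energy f n)" for m
  proof -
    let ?S = "SIGMA n:{..<m}. words_eq n"
    let ?cg = "\<lambda>(n, u). cmod (cyl_coeff g u)" and ?cf = "\<lambda>(n, u). cmod (cyl_coeff f u)"
    have sum_Sigma: "(\<Sum>n<m. \<Sum>u\<in>words_eq n. h u) = (\<Sum>(n,u)\<in>?S. h u)" for h :: "nat list \<Rightarrow> real"
      by (rule sum.Sigma) (auto simp: finite_words_eq)
    have "cmod (\<Sum>n<m. level_inner g f n)
        \<le> (\<Sum>n<m. \<Sum>u\<in>words_eq n. cmod (cnj (cyl_coeff g u) * cyl_coeff f u))"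
      unfolding level_inner_def by (rule order_trans[OF norm_sum sum_mono[OF norm_sum]])
    also have "\<dots> = (\<Sum>x\<in>?S. ?cg x * ?cf x)"
      by (simp add: sum_Sigma norm_mult case_prod_unfold)
    finally have "(cmod (\<Sum>n<m. level_inner g f n))\<^sup>2 \<le> (\<Sum>x\<in>?S. ?cg x * ?cf x)\<^sup>2"
      by (intro power_mono) auto
    also have "\<dots> \<le> (\<Sum>x\<in>?S. (?cg x)\<^sup>2) * (\<Sum>x\<in>?S. (?cf x)\<^sup>2)"
      by (rule Cauchy_Schwarz_ineq_sum)
    also have "\<dots> = (\<Sum>n<m. level_energy g n) * (\<Sum>n<m. level_energy f n)"
      by (simp add: level_energy_def sum_Sigma case_prod_unfold)
    finally show ?thesis .
  qed
  have "(\<lambda>m. (cmod (\<Sum>n<m. level_inner g f n))\<^sup>2) \<longlonglongrightarrow> (cmod (inner_mu p g (K_series f)))\<^sup>2"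
    using level_inner_sums[OF g f] unfolding sums_def by (intro tendsto_intros)
  moreover have "(\<lambda>m. (\<Sum>n<m. level_energy g n) * (\<Sum>n<m. level_energy f n)) \<longlonglongrightarrow> K_form g * K_form f"
    using level_energy_sums(1)[OF g] level_energy_sums(1)[OF f] unfolding sums_def
    by (intro tendsto_intros)
  ultimately show ?thesis using partial by (intro LIMSEQ_le) auto
qed

end

section \<open>The largest eigenvalue as a Rayleigh supremum\<close>

lemma cmod_diff_scaled_square:
  fixes a b :: complex and s :: real
  shows "(cmod (a - of_real s * b))\<^sup>2 = (cmod a)\<^sup>2 - 2 * s * Re (cnj b * a) + s\<^sup>2 * (cmod b)\<^sup>2"
  unfolding cmod_power2 by (simp add: power2_eq_square algebra_simps)

lemma diagonal_convergent_subseq: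
  fixes c :: "nat \<Rightarrow> 'a::countable \<Rightarrow> 'b::{heine_borel, real_normed_vector}"
  assumes bounded: "\<And>k x. norm (c k x) \<le> B"
  shows "\<exists>d. strict_mono d \<and> (\<forall>x. convergent (\<lambda>k. c (d k) x))"
proof -
  define P where "P n s \<longleftrightarrow> convergent (\<lambda>k. c (s k) (from_nat n))" for n s
  interpret D: subseqs P
    unfolding subseqs_def
  proof (intro allI impI)
    fix n and s :: "nat \<Rightarrow> nat"
    have "bounded (range (\<lambda>k. c (s k) (from_nat n)))"
      using bounded by (intro boundedI) auto
    then obtain l r where "strict_mono r" "((\<lambda>k. c (s k) (from_nat n)) \<circ> r) \<longlonglongrightarrow> l"
      using bounded_imp_convergent_subsequence by blast
    then show "\<exists>r. strict_mono r \<and> P n (s \<circ> r)"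
      unfolding P_def by (auto simp: convergent_def comp_def)
  qed
  have "convergent (\<lambda>k. c (D.diagseq k) x)" for x
  proof -
    have "P (to_nat x) (D.diagseq \<circ> (+) (Suc (to_nat x)))"
    proof (rule D.diagseq_holds)
      fix r s n assume "strict_mono (r :: nat \<Rightarrow> nat)" "P n s"
      then show "P n (s \<circ> r)"
        unfolding P_def using convergent_subseq_convergent by (auto simp: comp_def)
    qed
    then have "convergent (\<lambda>k. c (D.diagseq (k + Suc (to_nat x))) x)"
      unfolding P_def by (simp add: comp_def add.commute)
    then show ?thesis by (rule convergent_ignore_initial_segment[THEN iffD1])
  qed
  then show ?thesis using D.subseq_diagseq by blast
qed

context cantor_measure
begin

definition rayleigh_quotients :: "real set" where
  "rayleigh_quotients = {K_form f / sqnorm f | f. L2 p f \<and> sqnorm f \<noteq> 0}"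

definition rayleigh_sup :: real where
  "rayleigh_sup = Sup rayleigh_quotients"

lemma L2_one: "L2 p (\<lambda>x. 1)"
  by (rule L2_bounded[of _ 1]) auto

lemma sqnorm_one: "sqnorm (\<lambda>x. 1) = 1"
  unfolding sqnorm_def using M.prob_space by simp

lemma rayleigh_quotients_nonempty: "rayleigh_quotients \<noteq> {}"
  unfolding rayleigh_quotients_def using L2_one sqnorm_one by auto

lemma bdd_above_rayleigh_quotients: "bdd_above rayleigh_quotients"
proof (rule bdd_aboveI)
  fix y assume "y \<in> rayleigh_quotients"
  then obtain f where f: "L2 p f" "sqnorm f \<noteq> 0" "y = K_form f / sqnorm f"
    unfolding rayleigh_quotients_def by blast
  have "sqnorm f > 0" using f(2) sqnorm_nonneg[of f] by simp
  then show "y \<le> 1 / (1 - rho)"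
    using K_form_le[OF f(1)] f(3) by (simp add: divide_le_eq)
qed

lemma K_form_le_rayleigh_sup: assumes f: "L2 p f" shows "K_form f \<le> rayleigh_sup * sqnorm f"
proof (cases "sqnorm f = 0")
  case True
  then show ?thesis using K_form_le[OF f] by simp
next
  case False
  then have "K_form f / sqnorm f \<le> rayleigh_sup"
    unfolding rayleigh_sup_def using f
    by (intro cSup_upper bdd_above_rayleigh_quotients) (auto simp: rayleigh_quotients_def)
  moreover have "sqnorm f > 0" using False sqnorm_nonneg[of f] by simp
  ultimately show ?thesis by (simp add: field_simps)
qed

lemma rayleigh_sup_nonneg: "0 \<le> rayleigh_sup"
  using K_form_le_rayleigh_sup[OF L2_one] K_form_nonneg[OF L2_one] sqnorm_one by simp

lemma sqnorm_K_series_le: assumes f: "L2 p f" shows "sqnorm (K_series f) \<le> rayleigh_sup * K_form f"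
proof -
  have Kf: "L2 p (K_series f)" by (rule L2_K_series[OF f])
  have "(sqnorm (K_series f))\<^sup>2 = (cmod (inner_mu p (K_series f) (K_series f)))\<^sup>2"
    using inner_mu_self sqnorm_nonneg[of "K_series f"] by simp
  also have "\<dots> \<le> K_form (K_series f) * K_form f"
    by (rule inner_mu_K_series_Cauchy_Schwarz[OF Kf f])
  also have "\<dots> \<le> (rayleigh_sup * sqnorm (K_series f)) * K_form f"
    by (intro mult_right_mono K_form_le_rayleigh_sup Kf K_form_nonneg f)
  finally have "sqnorm (K_series f) * sqnorm (K_series f)
      \<le> sqnorm (K_series f) * (rayleigh_sup * K_form f)"
    by (simp add: power2_eq_square mult_ac)
  then show ?thesis
    using sqnorm_nonneg[of "K_series f"] rayleigh_sup_nonneg K_form_nonneg[OF f]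
    by (cases "sqnorm (K_series f) = 0") auto
qed

text \<open>Near-maximisers of the Rayleigh quotient are near-eigenfunctions for \<open>rayleigh_sup\<close>.\<close>

lemma sqnorm_K_series_sub_rayleigh_sup_le:
  assumes f: "L2 p f"
  shows "sqnorm (\<lambda>x. K_series f x - of_real rayleigh_sup * f x)
    \<le> rayleigh_sup * (rayleigh_sup * sqnorm f - K_form f)"
proof -
  let ?s = rayleigh_sup
  have Kf2: "integrable M (\<lambda>x. (cmod (K_series f x))\<^sup>2)"
    by (rule L2_integrable_square[OF L2_K_series[OF f]])
  have fKf: "integrable M (\<lambda>x. Re (cnj (f x) * K_series f x))"
    by (intro integrable_Re L2_integrable_inner f L2_K_series)
  have f2: "integrable M (\<lambda>x. (cmod (f x))\<^sup>2)" by (rule L2_integrable_square[OF f])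
  have "(\<integral>x. Re (cnj (f x) * K_series f x) \<partial>M) = K_form f"
    unfolding K_form_def inner_mu_def
    using integral_Re[OF L2_integrable_inner[OF f L2_K_series[OF f]]] by simp
  then have "sqnorm (\<lambda>x. K_series f x - of_real ?s * f x)
      = sqnorm (K_series f) - 2 * ?s * K_form f + ?s\<^sup>2 * sqnorm f"
    unfolding sqnorm_def cmod_diff_scaled_square using Kf2 fKf f2 by simp
  also have "\<dots> \<le> ?s * (?s * sqnorm f - K_form f)"
    using sqnorm_K_series_le[OF f] by (simp add: power2_eq_square algebra_simps)
  finally show ?thesis .
qed

lemma eigenvalue_le_rayleigh_sup:
  assumes f: "L2 p f" "sqnorm f \<noteq> 0" and eigen: "AE x in M. K_inf p f x = of_real l * f x"
  shows "l \<le> rayleigh_sup"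
proof -
  have "AE x in M. K_series f x = of_real l * f x"
    using eigen K_inf_AE_eq_K_series[OF f(1)] by eventually_elim simp
  moreover have [measurable]: "f \<in> borel_measurable borel" by (rule L2_measurable[OF f(1)])
  ultimately have "inner_mu p f (K_series f) = inner_mu p f (\<lambda>x. of_real l * f x)"
    unfolding inner_mu_def by (intro integral_cong_AE) (auto elim: AE_mp)
  also have "\<dots> = of_real (l * sqnorm f)"
    unfolding inner_mu_def using inner_mu_self[of f] by (simp add: inner_mu_def mult.left_commute)
  finally have "K_form f = l * sqnorm f"
    using level_energy_sums(2)[OF f(1)] by (metis of_real_eq_iff of_real_mult)
  moreover have "sqnorm f > 0" using f(2) sqnorm_nonneg[of f] by simp
  ultimately show ?thesis using K_form_le_rayleigh_sup[OF f(1)] by simp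
qed

lemma rayleigh_maximizing_sequence:
  obtains F where "\<And>k. L2 p (F k)" "\<And>k. sqnorm (F k) = 1"
    "\<And>k. rayleigh_sup - 1 / real (Suc k) < K_form (F k)"
proof -
  have "\<exists>f. L2 p f \<and> sqnorm f = 1 \<and> rayleigh_sup - 1 / real (Suc k) < K_form f" for k
  proof -
    have "rayleigh_sup - 1 / real (Suc k) < Sup rayleigh_quotients"
      unfolding rayleigh_sup_def[symmetric] by simp
    then obtain y where y: "y \<in> rayleigh_quotients" "rayleigh_sup - 1 / real (Suc k) < y"
      using less_cSupE[OF _ rayleigh_quotients_nonempty] by blast
    then obtain f where f: "L2 p f" "sqnorm f \<noteq> 0" "y = K_form f / sqnorm f"
      unfolding rayleigh_quotients_def by blast
    have n: "sqnorm f > 0" using f(2) sqnorm_nonneg[of f] by simp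
    define c where "c = complex_of_real (1 / sqrt (sqnorm f))"
    have "cmod c = 1 / sqrt (sqnorm f)" unfolding c_def norm_of_real using n by simp
    then have c: "(cmod c)\<^sup>2 = 1 / sqnorm f" using n by (simp add: power_divide)
    have "L2 p (\<lambda>x. c * f x)" "sqnorm (\<lambda>x. c * f x) = 1" "K_form (\<lambda>x. c * f x) = y"
      using f n by (simp_all add: L2_scale sqnorm_scale K_form_scale c)
    then show ?thesis using y(2) by blast
  qed
  then show ?thesis using that by metis
qed

lemma sqnorm_tendsto_zero_if_uniform_limit:
  assumes lim: "uniform_limit UNIV F f sequentially"
    and [measurable]: "\<And>k. F k \<in> borel_measurable borel" "f \<in> borel_measurable borel"
  shows "(\<lambda>k. sqnorm (\<lambda>x. F k x - f x)) \<longlonglongrightarrow> 0"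
proof (rule order_tendstoI)
  fix e :: real assume e: "0 < e"
  have "\<forall>\<^sub>F k in sequentially. \<forall>x\<in>UNIV. dist (F k x) (f x) < sqrt e / 2"
    using e by (intro uniform_limitD[OF lim]) simp
  then show "\<forall>\<^sub>F k in sequentially. sqnorm (\<lambda>x. F k x - f x) < e"
  proof eventually_elim
    case (elim k)
    then have "sqnorm (\<lambda>x. F k x - f x) \<le> (sqrt e / 2)\<^sup>2"
      by (intro sqnorm_le_bound) (auto simp: dist_norm less_imp_le)
    also have "\<dots> < e" using e by (simp add: power_divide)
    finally show ?case .
  qed
next
  show "\<forall>\<^sub>F k in sequentially. a < sqnorm (\<lambda>x. F k x - f x)" if "a < 0" for a
    by (intro always_eventually allI less_le_trans[OF that sqnorm_nonneg])
qed

lemma rayleigh_sup_eigenfunction: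
  assumes pos: "0 < rayleigh_sup"
  obtains g where "L2 p g" "sqnorm g \<noteq> 0" "\<And>x. K_series g x = of_real rayleigh_sup * g x"
proof -
  let ?s = "rayleigh_sup"
  obtain F where F: "\<And>k. L2 p (F k)" "\<And>k. sqnorm (F k) = 1"
    "\<And>k. ?s - 1 / real (Suc k) < K_form (F k)"
    using rayleigh_maximizing_sequence by blast
  obtain d where d: "strict_mono d" "\<And>u. convergent (\<lambda>k. cyl_coeff (F (d k)) u)"
    using diagonal_convergent_subseq[of "\<lambda>k. cyl_coeff (F k)" 1] cyl_coeff_le_norm[OF F(1)] F(2)
    by auto
  define G where "G k = F (d k)" for k
  define A where "A u = lim (\<lambda>k. cyl_coeff (G k) u)" for u
  define g where "g = cylinder_series A"
  have G: "L2 p (G k)" "sqnorm (G k) = 1" for k using F by (simp_all add: G_def)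
  have decays_G: "decays 1 (cyl_coeff (G k))" for k using decays_cyl_coeff[OF G(1)] G(2) by simp
  have coeff_lim: "(\<lambda>k. cyl_coeff (G k) u) \<longlonglongrightarrow> A u" for u
    using d(2) unfolding A_def G_def by (simp add: convergent_LIMSEQ_iff)
  have g: "L2 p g"
    unfolding g_def by (rule L2_cylinder_series[OF decays_limit[OF decays_G coeff_lim]])
  have sG: "L2 p (\<lambda>x. of_real ?s * G k x)" for k by (rule L2_scale[OF G(1)])
  have uniform: "uniform_limit UNIV (\<lambda>k. K_series (G k)) g sequentially"
    unfolding K_series_def g_def by (rule cylinder_series_uniform_limit[OF decays_G coeff_lim])
  have "(\<lambda>k. sqnorm (\<lambda>x. K_series (G k) x - g x)) \<longlonglongrightarrow> 0"
    by (rule sqnorm_tendsto_zero_if_uniform_limit[OF uniform]) (simp_all add: L2_measurable[OF g])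
  moreover have "(\<lambda>k. sqnorm (\<lambda>x. of_real ?s * G k x - K_series (G k) x)) \<longlonglongrightarrow> 0"
  proof (rule Lim_null_comparison)
    have "sqnorm (\<lambda>x. of_real ?s * G k x - K_series (G k) x)
        \<le> ?s * (?s * sqnorm (G k) - K_form (G k))" for k
      using sqnorm_K_series_sub_rayleigh_sup_le[OF G(1)] sqnorm_diff_commute by metis
    also have "?s * (?s * sqnorm (G k) - K_form (G k)) \<le> ?s * (1 / real (Suc k))" for k
    proof -
      have "1 / real (Suc (d k)) \<le> 1 / real (Suc k)"
        using seq_suble[OF d(1), of k] by (intro divide_left_mono) auto
      then show ?thesis
        using F(3)[of "d k"] G(2)[of k] pos by (intro mult_left_mono) (auto simp: G_def)
    qed
    finally show "\<forall>\<^sub>F k in sequentially. norm (sqnorm (\<lambda>x. of_real ?s * G k x - K_series (G k) x))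
        \<le> ?s * (1 / real (Suc k))"
      using sqnorm_nonneg by simp
    show "(\<lambda>k. ?s * (1 / real (Suc k))) \<longlonglongrightarrow> 0"
      by (intro tendsto_mult_right_zero LIMSEQ_Suc[OF lim_inverse_n'])
  qed
  ultimately have "(\<lambda>k. 2 * sqnorm (\<lambda>x. of_real ?s * G k x - K_series (G k) x)
      + 2 * sqnorm (\<lambda>x. K_series (G k) x - g x)) \<longlonglongrightarrow> 0"
    by (intro tendsto_add_zero tendsto_mult_right_zero)
  then have L2_lim: "(\<lambda>k. sqnorm (\<lambda>x. of_real ?s * G k x - g x)) \<longlonglongrightarrow> 0"
    by (rule Lim_null_comparison[rotated])
       (use sqnorm_nonneg sqnorm_diff_triangle[OF sG g L2_K_series[OF G(1)]] in simp)
  have "K_series g x = of_real ?s * g x" for x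
  proof (rule LIMSEQ_unique)
    show "(\<lambda>k. K_series (\<lambda>y. of_real ?s * G k y) x) \<longlonglongrightarrow> of_real ?s * g x"
      unfolding K_series_scale[OF G(1)]
      by (intro tendsto_mult_left tendsto_uniform_limitI[OF uniform]) simp
    have "(\<lambda>k. sqrt (sqnorm (\<lambda>y. of_real ?s * G k y - g y)) / (1 - rho)) \<longlonglongrightarrow> 0"
      using tendsto_real_sqrt[OF L2_lim] by (intro tendsto_divide_zero) simp
    then have "(\<lambda>k. K_series (\<lambda>y. of_real ?s * G k y) x - K_series g x) \<longlonglongrightarrow> 0"
      by (rule Lim_null_comparison[rotated])
         (use norm_K_series_le[OF L2_diff[OF sG g]] K_series_diff[OF sG g] in simp)
    then show "(\<lambda>k. K_series (\<lambda>y. of_real ?s * G k y) x) \<longlonglongrightarrow> K_series g x"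
      by (simp add: LIM_zero_iff)
  qed
  moreover have "sqnorm g \<noteq> 0"
  proof
    assume g0: "sqnorm g = 0"
    have "(\<lambda>k. 2 * sqnorm (\<lambda>x. of_real ?s * G k x - g x) + 2 * sqnorm (\<lambda>x. g x - 0)) \<longlonglongrightarrow> 0"
      using L2_lim g0 by (auto intro: tendsto_add_zero tendsto_mult_right_zero)
    then have "?s\<^sup>2 \<le> 0"
    proof (rule LIMSEQ_le_const, intro exI allI impI)
      show "?s\<^sup>2 \<le> 2 * sqnorm (\<lambda>x. of_real ?s * G k x - g x) + 2 * sqnorm (\<lambda>x. g x - 0)" for k
        using sqnorm_diff_triangle[OF sG L2_bounded[of "\<lambda>_. 0" 0] g, of k]
          sqnorm_scale[of "of_real ?s" "G k"] G(2)
        by simp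
    qed
    then show False using pos by simp
  qed
  ultimately show ?thesis using g that by blast
qed

lemma lam_max_op_K_inf:
  assumes pos: "0 < rayleigh_sup"
  shows "lam_max_op p (K_inf p) = rayleigh_sup"
  unfolding lam_max_op_def
proof (rule Greatest_equality)
  obtain g where g: "L2 p g" "sqnorm g \<noteq> 0" "\<And>x. K_series g x = of_real rayleigh_sup * g x"
    using rayleigh_sup_eigenfunction[OF pos] by blast
  have "AE x in M. K_inf p g x = of_real rayleigh_sup * g x"
    using K_inf_AE_eq_K_series[OF g(1)] by eventually_elim (simp add: g(3))
  moreover have "L2norm p g \<noteq> 0" using g(2) sqnorm_nonneg[of g] by (simp add: L2norm_eq_sqrt_sqnorm)
  ultimately show "\<exists>f. L2 p f \<and> L2norm p f \<noteq> 0 \<and>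
      (AE x in M. K_inf p f x = of_real rayleigh_sup * f x)"
    using g(1) by blast
next
  fix l assume "\<exists>f. L2 p f \<and> L2norm p f \<noteq> 0 \<and> (AE x in M. K_inf p f x = complex_of_real l * f x)"
  then obtain f where f: "L2 p f" "L2norm p f \<noteq> 0" "AE x in M. K_inf p f x = of_real l * f x"
    by blast
  then show "l \<le> rayleigh_sup"
    by (intro eigenvalue_le_rayleigh_sup) (auto simp: L2norm_eq_sqrt_sqnorm)
qed

end

section \<open>The compression of \<open>K\<^sub>\<infinity>\<close> to the span of \<open>\<phi>\<close> and \<open>e\<^sub>\<emptyset>\<close>\<close>

lemma sums_of_real_shifted_geometric:
  fixes f :: "nat \<Rightarrow> complex" and q c :: real
  assumes "norm q < 1" "f 0 = 0" "\<And>k. f (Suc k) = of_real (c * q ^ k)"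
  shows "f sums of_real (c / (1 - q))"
proof -
  have "(\<lambda>k. c * q ^ k) sums (c * (1 / (1 - q)))"
    using assms(1) by (intro sums_mult geometric_sums)
  then have "(\<lambda>k. f (Suc k)) sums of_real (c / (1 - q))"
    unfolding assms(3) by (intro sums_of_real) simp
  then show ?thesis using sums_Suc_iff[of f] assms(2) by simp
qed

context cantor_measure
begin

lemma inner_mu_linear_right:
  assumes f: "L2 p f" and g1: "L2 p g1" and g2: "L2 p g2"
  shows "inner_mu p f (\<lambda>t. a * g1 t + b * g2 t) = a * inner_mu p f g1 + b * inner_mu p f g2"
proof -
  have "inner_mu p f (\<lambda>t. a * g1 t + b * g2 t)
      = (\<integral>t. a * (cnj (f t) * g1 t) + b * (cnj (f t) * g2 t) \<partial>M)"
    unfolding inner_mu_def by (simp add: algebra_simps)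
  also have "\<dots> = a * inner_mu p f g1 + b * inner_mu p f g2"
    unfolding inner_mu_def using L2_integrable_inner[OF f g1] L2_integrable_inner[OF f g2] by simp
  finally show ?thesis .
qed

lemma inner_mu_linear_left:
  assumes f1: "L2 p f1" and f2: "L2 p f2" and g: "L2 p g"
  shows "inner_mu p (\<lambda>t. a * f1 t + b * f2 t) g = cnj a * inner_mu p f1 g + cnj b * inner_mu p f2 g"
  using inner_mu_linear_right[OF g f1 f2, of a b]
  by (subst (1 2 3) inner_mu_commute) simp

lemma inner_mu_K_inf:
  assumes g: "L2 p g" and f: "L2 p f"
  shows "inner_mu p g (K_inf p f) = inner_mu p g (K_series f)"
proof -
  have [measurable]: "g \<in> borel_measurable borel" "K_inf p f \<in> borel_measurable borel"
    using L2_measurable g L2_K_inf[OF f] by auto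
  show ?thesis unfolding inner_mu_def
  proof (rule integral_cong_AE)
    show "AE x in M. cnj (g x) * K_inf p f x = cnj (g x) * K_series f x"
      using K_inf_AE_eq_K_series[OF f] by eventually_elim simp
  qed measurable
qed

text \<open>\<open>coincidence\<close>, \<open>h_root\<close> and \<open>e_root\<close> are \<open>q\<close>, \<open>h\<^sup>(\<^sup>p\<^sup>)\<^sub>\<emptyset>\<close> and \<open>e\<^sub>\<emptyset>\<close> of the statement.\<close>

definition coincidence :: real where
  "coincidence = p\<^sup>2 + (1 - p)\<^sup>2"

definition phi :: "real \<Rightarrow> complex" where
  "phi = ind cantor"

definition h_root :: "real \<Rightarrow> complex" where
  "h_root x = of_real (1 - p) * ind (Cw [0]) x - of_real p * ind (Cw [2]) x"

definition e_root :: "real \<Rightarrow> complex" where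
  "e_root x = h_root x / of_real (sqrt (p * (1 - p)))"

lemma one_minus_coincidence: "1 - coincidence = 2 * p * (1 - p)"
  by (simp add: coincidence_def power2_eq_square algebra_simps)

lemma coincidence_bounds: "0 < coincidence" "coincidence < 1"
proof -
  have "2 * p * (1 - p) > 0" using p0 p1 by simp
  then show "coincidence < 1" using one_minus_coincidence by linarith
  show "0 < coincidence" unfolding coincidence_def using p0 by (simp add: add_pos_nonneg)
qed

lemma L2_phi: "L2 p phi"
  unfolding phi_def by (rule L2_indicator[OF cantor_borel])

lemma L2_h_root: "L2 p h_root"
  unfolding h_root_def[abs_def] by (intro L2_diff L2_scale L2_indicator Cw_borel)

definition sigma :: real where
  "sigma = sqrt (p * (1 - p))"

lemma sigma_pos: "0 < sigma"
  using p0 p1 by (simp add: sigma_def)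

lemma sigma_square: "sigma * sigma = p * (1 - p)"
  using p0 p1 by (simp add: sigma_def)

lemma e_root_eq: "e_root = (\<lambda>x. of_real (1 / sigma) * h_root x)"
  unfolding e_root_def sigma_def by (auto simp: field_simps)

lemma L2_e_root: "L2 p e_root"
  unfolding e_root_eq by (intro L2_scale L2_h_root)

lemma cyl_coeff_indicator:
  assumes "A \<in> sets borel"
  shows "cyl_coeff (ind A) u = of_real (measure M (Cw u \<inter> A))"
proof -
  have "cyl_coeff (ind A) u = (\<integral>x. of_real (indicator (Cw u \<inter> A) x) \<partial>M)"
    unfolding cyl_coeff_eq_integral ind_def
    by (rule Bochner_Integration.integral_cong) (auto simp: indicator_def)
  also have "\<dots> = of_real (measure M (Cw u \<inter> A))"
    using assms by (simp add: integral_complex_of_real del: of_real_indicator)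
  finally show ?thesis .
qed

lemma cyl_coeff_phi: "set u \<subseteq> {0,2} \<Longrightarrow> cyl_coeff phi u = of_real (word_weight p u)"
  unfolding phi_def using Cw_sub_cantor[of u]
  by (simp add: cyl_coeff_indicator[OF cantor_borel] Int_absorb2 measure_Cw)

text \<open>On a cylinder \<open>C\<^sub>d\<^sub>w\<close> the function \<open>h_root\<close> is the constant \<open>1 - p\<close> or \<open>-p\<close>, and
  \<open>\<mu>(C\<^sub>d\<^sub>w)\<close> carries the complementary factor \<open>p\<close> or \<open>1 - p\<close>.\<close>

lemma cyl_coeff_e_root:
  assumes w: "set w \<subseteq> {0,2}"
  shows "cyl_coeff e_root [] = 0"
    and "cyl_coeff e_root (0 # w) = of_real (sigma * word_weight p w)"
    and "cyl_coeff e_root (2 # w) = of_real (- sigma * word_weight p w)"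
proof -
  define H where "H u = (1 - p) * measure M (Cw u \<inter> Cw [0]) - p * measure M (Cw u \<inter> Cw [2])" for u
  have e: "cyl_coeff e_root u = of_real (H u / sigma)" for u
  proof -
    have "cyl_coeff h_root u = of_real (H u)"
      unfolding h_root_def[abs_def] H_def
      by (simp add: cyl_coeff_diff cyl_coeff_scale L2_scale L2_indicator Cw_borel
          cyl_coeff_indicator)
    then show ?thesis unfolding e_root_eq cyl_coeff_scale by simp
  qed
  have disj: "Cw [0] \<inter> Cw [2] = {}" by (rule Cw_disjoint_eq[of _ 1]) (auto simp: words_eq_def)
  have sub: "Cw (d # w) \<subseteq> Cw [d]" for d using Cw_prefix[OF w, of "[d]"] by simp
  have "Cw [] \<inter> Cw [0] = Cw [0]" "Cw [] \<inter> Cw [2] = Cw [2]"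
    using Cw_sub_cantor[of "[0]"] Cw_sub_cantor[of "[2]"] by auto
  moreover have "measure M (Cw [0]) = p" "measure M (Cw [2]) = 1 - p"
    by (simp_all add: measure_Cw)
  ultimately have "H [] = (1 - p) * p - p * (1 - p)" by (simp only: H_def)
  then show "cyl_coeff e_root [] = 0" by (simp add: e)
  have "Cw (0 # w) \<inter> Cw [0] = Cw (0 # w)" "Cw (0 # w) \<inter> Cw [2] = {}"
    using sub[of 0] disj by auto
  then have "H (0 # w) = sigma * sigma * word_weight p w"
    using measure_Cw[of "0 # w"] w by (simp add: H_def sigma_square)
  then show "cyl_coeff e_root (0 # w) = of_real (sigma * word_weight p w)"
    using sigma_pos by (simp add: e)
  have "Cw (2 # w) \<inter> Cw [2] = Cw (2 # w)" "Cw (2 # w) \<inter> Cw [0] = {}"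
    using sub[of 2] disj by auto
  moreover have "measure M (Cw (2 # w)) = (1 - p) * word_weight p w"
    using w by (simp add: measure_Cw)
  ultimately have "H (2 # w) = (1 - p) * 0 - p * ((1 - p) * word_weight p w)"
    by (simp only: H_def measure_empty)
  then have "H (2 # w) = - (sigma * sigma) * word_weight p w"
    unfolding sigma_square by simp
  then show "cyl_coeff e_root (2 # w) = of_real (- sigma * word_weight p w)"
    using sigma_pos by (simp add: e)
qed

lemma inner_mu_phi_phi: "inner_mu p phi phi = 1"
  using cyl_coeff_phi[of "[]"] by (simp add: cyl_coeff_def phi_def)

lemma inner_mu_phi_e_root: "inner_mu p phi e_root = 0"
  using cyl_coeff_e_root(1)[of "[]"] by (simp add: cyl_coeff_def phi_def)

lemma inner_mu_e_root_phi: "inner_mu p e_root phi = 0"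
  by (subst inner_mu_commute) (simp add: inner_mu_phi_e_root)

lemma inner_mu_e_root_e_root: "inner_mu p e_root e_root = 1"
proof -
  have e: "inner_mu p e_root (ind (Cw u)) = cnj (cyl_coeff e_root u)" for u
    unfolding cyl_coeff_def by (rule inner_mu_commute)
  have "h_root = (\<lambda>t. of_real (1 - p) * ind (Cw [0]) t + (- of_real p) * ind (Cw [2]) t)"
    by (simp add: h_root_def fun_eq_iff)
  then have "inner_mu p e_root h_root
      = of_real (1 - p) * cnj (cyl_coeff e_root [0]) + (- of_real p) * cnj (cyl_coeff e_root [2])"
    using inner_mu_linear_right[OF L2_e_root L2_indicator[OF Cw_borel] L2_indicator[OF Cw_borel],
        where a="of_real (1 - p)" and b="- of_real p"]
    by (simp only: e)
  also have "\<dots> = of_real sigma"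
    using cyl_coeff_e_root(2,3)[of "[]"] by (simp add: algebra_simps)
  finally have "inner_mu p e_root h_root = of_real sigma" .
  moreover have "inner_mu p e_root e_root = of_real (1 / sigma) * inner_mu p e_root h_root"
    unfolding inner_mu_def e_root_eq by (simp add: mult.left_commute)
  ultimately show ?thesis using sigma_pos by simp
qed

lemma level_inner_Suc:
  "level_inner g f (Suc n) = (\<Sum>w\<in>words_eq n.
      cnj (cyl_coeff g (0 # w)) * cyl_coeff f (0 # w)
      + cnj (cyl_coeff g (2 # w)) * cyl_coeff f (2 # w))"
  unfolding level_inner_def sum_words_Suc sum.distrib ..

lemma sum_word_weight_square: "(\<Sum>u\<in>words_eq n. (word_weight p u)\<^sup>2) = coincidence ^ n"
proof (induction n)
  case (Suc n)
  have "(\<Sum>u\<in>words_eq (Suc n). (word_weight p u)\<^sup>2)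
      = (\<Sum>w\<in>words_eq n. p\<^sup>2 * (word_weight p w)\<^sup>2) + (\<Sum>w\<in>words_eq n. (1-p)\<^sup>2 * (word_weight p w)\<^sup>2)"
    unfolding sum_words_Suc by (simp add: power_mult_distrib)
  also have "\<dots> = coincidence * (\<Sum>w\<in>words_eq n. (word_weight p w)\<^sup>2)"
    by (simp add: sum_distrib_left[symmetric] coincidence_def algebra_simps)
  finally show ?case using Suc by simp
qed (simp add: words_eq_0)

lemma level_inner_phi_phi: "level_inner phi phi n = of_real (coincidence ^ n)"
proof -
  have "level_inner phi phi n = of_real (\<Sum>u\<in>words_eq n. (word_weight p u)\<^sup>2)"
    unfolding level_inner_def of_real_sum
    by (intro sum.cong) (auto simp: cyl_coeff_phi words_eq_set power2_eq_square)
  then show ?thesis by (simp add: sum_word_weight_square)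
qed

lemma level_inner_phi_e_root:
  "level_inner phi e_root 0 = 0"
  "level_inner phi e_root (Suc n) = of_real ((2 * p - 1) * sigma * coincidence ^ n)"
  "level_inner e_root phi 0 = 0"
  "level_inner e_root phi (Suc n) = of_real ((2 * p - 1) * sigma * coincidence ^ n)"
proof -
  let ?c = "(2 * p - 1) * sigma"
  show "level_inner phi e_root 0 = 0" "level_inner e_root phi 0 = 0"
    by (simp_all add: level_inner_def words_eq_0 cyl_coeff_e_root(1)[of "[]"])
  have "level_inner phi e_root (Suc n) = of_real (\<Sum>w\<in>words_eq n. ?c * (word_weight p w)\<^sup>2)"
    "level_inner e_root phi (Suc n) = of_real (\<Sum>w\<in>words_eq n. ?c * (word_weight p w)\<^sup>2)"
    unfolding level_inner_Suc of_real_sum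
    by (auto intro!: sum.cong
        simp: words_eq_set cyl_coeff_phi cyl_coeff_e_root power2_eq_square algebra_simps)
  then show "level_inner phi e_root (Suc n) = of_real (?c * coincidence ^ n)"
    "level_inner e_root phi (Suc n) = of_real (?c * coincidence ^ n)"
    by (simp_all add: sum_distrib_left[symmetric] sum_word_weight_square)
qed

lemma level_inner_e_root_e_root:
  "level_inner e_root e_root 0 = 0"
  "level_inner e_root e_root (Suc n) = of_real ((1 - coincidence) * coincidence ^ n)"
proof -
  show "level_inner e_root e_root 0 = 0"
    by (simp add: level_inner_def words_eq_0 cyl_coeff_e_root(1)[of "[]"])
  have "level_inner e_root e_root (Suc n)
      = of_real (\<Sum>w\<in>words_eq n. 2 * (sigma * sigma) * (word_weight p w)\<^sup>2)"
    unfolding level_inner_Suc of_real_sum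
    by (intro sum.cong) (auto simp: words_eq_set cyl_coeff_e_root power2_eq_square)
  also have "2 * (sigma * sigma) = 1 - coincidence"
    by (simp add: sigma_square one_minus_coincidence)
  finally show "level_inner e_root e_root (Suc n) = of_real ((1 - coincidence) * coincidence ^ n)"
    by (simp add: sum_distrib_left[symmetric] sum_word_weight_square)
qed

definition m11 :: real where
  "m11 = 1 / (1 - coincidence)"

definition m12 :: real where
  "m12 = (2 * p - 1) * sigma / (1 - coincidence)"

lemma inner_mu_K_series_entries:
  "inner_mu p phi (K_series phi) = of_real m11"
  "inner_mu p phi (K_series e_root) = of_real m12"
  "inner_mu p e_root (K_series phi) = of_real m12"
  "inner_mu p e_root (K_series e_root) = 1"
proof -
  have q: "norm coincidence < 1" using coincidence_bounds by simp
  have "level_inner phi phi sums of_real m11"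
    unfolding level_inner_phi_phi m11_def using geometric_sums[OF q] by (intro sums_of_real) simp
  then show "inner_mu p phi (K_series phi) = of_real m11"
    using level_inner_sums[OF L2_phi L2_phi] sums_unique2 by blast
  have "level_inner phi e_root sums of_real m12" "level_inner e_root phi sums of_real m12"
    unfolding m12_def by (intro sums_of_real_shifted_geometric[OF q] level_inner_phi_e_root)+
  then show "inner_mu p phi (K_series e_root) = of_real m12"
    "inner_mu p e_root (K_series phi) = of_real m12"
    using level_inner_sums[OF L2_phi L2_e_root] level_inner_sums[OF L2_e_root L2_phi] sums_unique2
    by blast+
  have "level_inner e_root e_root sums of_real ((1 - coincidence) / (1 - coincidence))"
    by (intro sums_of_real_shifted_geometric[OF q] level_inner_e_root_e_root)
  then show "inner_mu p e_root (K_series e_root) = 1"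
    using level_inner_sums[OF L2_e_root L2_e_root] sums_unique2 coincidence_bounds by fastforce
qed

end

section \<open>The largest eigenvalue of a symmetric \<open>2 \<times> 2\<close> matrix\<close>

definition sym2 :: "real \<Rightarrow> real \<Rightarrow> real \<Rightarrow> real^2^2" where
  "sym2 a b d = (\<chi> i j. if i = 1 \<and> j = 1 then a else if i = 2 \<and> j = 2 then d else b)"

definition sym2_top :: "real \<Rightarrow> real \<Rightarrow> real \<Rightarrow> real" where
  "sym2_top a b d = 1/2 * (a + d) + 1/2 * sqrt ((a - d)\<^sup>2 + 4 * b\<^sup>2)"

lemma sym2_mult_vec:
  "(sym2 a b d *v v) $ 1 = a * v $ 1 + b * v $ 2"
  "(sym2 a b d *v v) $ 2 = b * v $ 1 + d * v $ 2"
  by (simp_all add: sym2_def matrix_vector_mult_def sum_2)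

lemma sym2_eigenvalue_char:
  assumes "v \<noteq> 0" "sym2 a b d *v v = l *\<^sub>R v"
  shows "(a - l) * (d - l) = b\<^sup>2"
proof -
  define x y where "x = v $ 1" and "y = v $ 2"
  have e1: "(a - l) * x + b * y = 0" and e2: "b * x + (d - l) * y = 0"
    using arg_cong[OF assms(2), of "\<lambda>w. w $ 1"] arg_cong[OF assms(2), of "\<lambda>w. w $ 2"]
    by (simp_all add: sym2_mult_vec algebra_simps x_def y_def)
  have "((a - l) * (d - l) - b\<^sup>2) * x = (d - l) * ((a - l) * x + b * y) - b * (b * x + (d - l) * y)"
    "((a - l) * (d - l) - b\<^sup>2) * y = (a - l) * (b * x + (d - l) * y) - b * ((a - l) * x + b * y)"
    by (simp_all add: power2_eq_square algebra_simps)
  then have "((a - l) * (d - l) - b\<^sup>2) * x = 0" "((a - l) * (d - l) - b\<^sup>2) * y = 0"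
    using e1 e2 by simp_all
  moreover have "x \<noteq> 0 \<or> y \<noteq> 0" using assms(1) by (auto simp: vec_eq_iff forall_2 x_def y_def)
  ultimately show ?thesis by auto
qed

lemma sym2_char_root_le_top:
  assumes "(a - l) * (d - l) = b\<^sup>2"
  shows "l \<le> sym2_top a b d"
proof -
  have "(l - (a + d) / 2)\<^sup>2 = ((a - d)\<^sup>2 + 4 * b\<^sup>2) / 4"
    using assms by (simp add: power2_eq_square field_simps)
  then have "\<bar>l - (a + d) / 2\<bar> = sqrt ((a - d)\<^sup>2 + 4 * b\<^sup>2) / 2"
    by (metis real_sqrt_abs real_sqrt_divide real_sqrt_four)
  then show ?thesis unfolding sym2_top_def by linarith
qed

lemma sym2_top_char: "(a - sym2_top a b d) * (d - sym2_top a b d) = b\<^sup>2"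
proof -
  have D: "(sqrt ((a - d)\<^sup>2 + 4 * b\<^sup>2))\<^sup>2 = (a - d)\<^sup>2 + 4 * b\<^sup>2" by simp
  show ?thesis unfolding sym2_top_def
    by (simp add: power2_eq_square field_simps)
       (use D in \<open>simp add: power2_eq_square algebra_simps\<close>)
qed

text \<open>The vector \<open>(l - d, b)\<close> is an eigenvector unless it vanishes, in which case \<open>b = 0\<close>
  and \<open>(0, 1)\<close> is one.\<close>

lemma sym2_eigenvector:
  fixes a b d l :: real
  assumes "(a - l) * (d - l) = b\<^sup>2"
  obtains x y where "x \<noteq> 0 \<or> y \<noteq> 0" "a * x + b * y = l * x" "b * x + d * y = l * y"
proof (cases "l = d \<and> b = 0")
  case True
  then show ?thesis by (intro that[of 0 1]) simp_all
next
  case False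
  then show ?thesis
    using that[of "l - d" b] assms by (auto simp: power2_eq_square algebra_simps)
qed

lemma lam_max_mat_sym2: "lam_max_mat (sym2 a b d) = sym2_top a b d"
  unfolding lam_max_mat_def
proof (rule Greatest_equality)
  obtain x y where xy: "x \<noteq> 0 \<or> y \<noteq> 0" "a * x + b * y = sym2_top a b d * x"
    "b * x + d * y = sym2_top a b d * y"
    using sym2_eigenvector[OF sym2_top_char] by blast
  define v :: "real^2" where "v = (\<chi> i. if i = 1 then x else y)"
  have "v $ 1 = x" "v $ 2 = y" by (simp_all add: v_def)
  then have "v \<noteq> 0" using xy(1) by auto
  moreover have "sym2 a b d *v v = sym2_top a b d *\<^sub>R v"
    using xy(2,3) by (simp add: vec_eq_iff forall_2 sym2_mult_vec v_def)
  ultimately show "\<exists>v::real^2. v \<noteq> 0 \<and> sym2 a b d *v v = sym2_top a b d *\<^sub>R v" by blast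
next
  fix l assume "\<exists>v::real^2. v \<noteq> 0 \<and> sym2 a b d *v v = l *\<^sub>R v"
  then show "l \<le> sym2_top a b d"
    by (metis sym2_eigenvalue_char sym2_char_root_le_top)
qed

context cantor_measure
begin

lemma K_form_span_phi_e_root:
  "K_form (\<lambda>t. of_real x * phi t + of_real y * e_root t)
    = x * (m11 * x + m12 * y) + y * (m12 * x + y)"
  "sqnorm (\<lambda>t. of_real x * phi t + of_real y * e_root t) = x\<^sup>2 + y\<^sup>2"
proof -
  let ?v = "\<lambda>t. of_real x * phi t + of_real y * e_root t"
  have v: "L2 p ?v" by (intro L2_add L2_scale L2_phi L2_e_root)
  have Kv: "K_series ?v = (\<lambda>t. of_real x * K_series phi t + of_real y * K_series e_root t)"
    using K_series_add[OF L2_scale[OF L2_phi] L2_scale[OF L2_e_root]]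
    by (simp add: fun_eq_iff K_series_scale L2_phi L2_e_root)
  have left: "inner_mu p ?v g = of_real x * inner_mu p phi g + of_real y * inner_mu p e_root g"
    if "L2 p g" for g
    using inner_mu_linear_left[OF L2_phi L2_e_root that, of "of_real x" "of_real y"] by simp
  have "inner_mu p ?v (K_series ?v)
      = of_real x * inner_mu p ?v (K_series phi) + of_real y * inner_mu p ?v (K_series e_root)"
    unfolding Kv
    by (rule inner_mu_linear_right[OF v L2_K_series[OF L2_phi] L2_K_series[OF L2_e_root]])
  also have "\<dots> = of_real (x * (m11 * x + m12 * y) + y * (m12 * x + y))"
    by (simp only: left[OF L2_K_series[OF L2_phi]] left[OF L2_K_series[OF L2_e_root]]
        inner_mu_K_series_entries) (simp add: algebra_simps)
  finally show "K_form ?v = x * (m11 * x + m12 * y) + y * (m12 * x + y)"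
    unfolding K_form_def by (simp only: Re_complex_of_real)
  have "inner_mu p ?v ?v = of_real x * inner_mu p ?v phi + of_real y * inner_mu p ?v e_root"
    by (rule inner_mu_linear_right[OF v L2_phi L2_e_root])
  also have "\<dots> = of_real (x\<^sup>2 + y\<^sup>2)"
    by (simp only: left[OF L2_phi] left[OF L2_e_root] inner_mu_phi_phi inner_mu_phi_e_root
        inner_mu_e_root_phi inner_mu_e_root_e_root) (simp add: power2_eq_square)
  finally show "sqnorm ?v = x\<^sup>2 + y\<^sup>2" unfolding inner_mu_self of_real_eq_iff .
qed

lemma compression_eigenvalue_le_rayleigh_sup:
  assumes "(m11 - l) * (1 - l) = m12\<^sup>2"
  shows "l \<le> rayleigh_sup"
proof -
  obtain x y where xy: "x \<noteq> 0 \<or> y \<noteq> 0" "m11 * x + m12 * y = l * x" "m12 * x + 1 * y = l * y"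
    by (rule sym2_eigenvector[OF assms])
  let ?v = "\<lambda>t. of_real x * phi t + of_real y * e_root t"
  have "l * (x\<^sup>2 + y\<^sup>2) = K_form ?v"
    using xy K_form_span_phi_e_root(1)[of x y] by (simp add: power2_eq_square algebra_simps)
  also have "\<dots> \<le> rayleigh_sup * (x\<^sup>2 + y\<^sup>2)"
    using K_form_le_rayleigh_sup[of ?v] K_form_span_phi_e_root(2)
    by (simp add: L2_add L2_scale L2_phi L2_e_root)
  finally show ?thesis
    using xy(1) by (simp add: add_pos_nonneg sum_power2_gt_zero_iff)
qed

end

theorem corollary5p3:
  fixes p :: real
  assumes "0 < p" and "p < 1"
  defines "q \<equiv> p\<^sup>2 + (1 - p)\<^sup>2"
  defines "\<phi> \<equiv> ind cantor"
  defines "h \<equiv> (\<lambda>x. complex_of_real (1 - p) * ind (Cw [0]) x - complex_of_real p * ind (Cw [2]) x)"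
  defines "e \<equiv> (\<lambda>x. h x / complex_of_real (sqrt (p * (1 - p))))"
  defines "B \<equiv> (\<lambda>i::2. if i = 1 then \<phi> else e)"
  shows "inner_mu p \<phi> \<phi> = 1 \<and> inner_mu p e e = 1 \<and> inner_mu p \<phi> e = 0
    \<and> (\<chi> i j. inner_mu p (B i) (K_inf p (B j))) = (\<chi> i j. complex_of_real (Mp p $ i $ j))
    \<and> Mp p = (\<chi> i j. if i = 1 \<and> j = 1 then 1 / (1 - q)
                else if i = 2 \<and> j = 2 then 1
                else (2 * p - 1) * sqrt (p * (1 - p)) / (1 - q))
    \<and> lam_max_op p (K_inf p) \<ge> lam_max_mat (Mp p)
    \<and> lam_max_mat (Mp p) = 1/2 * (1 / (1 - q) + 1)
        + 1/2 * sqrt ((1 / (1 - q) - 1)\<^sup>2 + 4 * (2 * p - 1)\<^sup>2 * p * (1 - p) / (1 - q)\<^sup>2)"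
proof -
  interpret cantor_measure p using assms(1,2) by unfold_locales
  have q: "q = coincidence" by (simp add: q_def coincidence_def)
  have basis: "\<phi> = phi" "e = e_root"
    by (simp_all add: \<phi>_def phi_def e_def h_def e_root_def h_root_def fun_eq_iff)
  have Mp: "Mp p = sym2 m11 m12 1"
    by (simp add: Mp_def Let_def sym2_def m11_def m12_def sigma_def coincidence_def)
  have gram: "(\<chi> i j. inner_mu p (B i) (K_inf p (B j))) = (\<chi> i j. complex_of_real (Mp p $ i $ j))"
    by (simp add: vec_eq_iff forall_2 B_def basis Mp sym2_def inner_mu_K_inf L2_phi L2_e_root
        inner_mu_K_series_entries)
  have lam_M: "lam_max_mat (Mp p) = sym2_top m11 m12 1"
    unfolding Mp by (rule lam_max_mat_sym2)
  have top_le: "sym2_top m11 m12 1 \<le> rayleigh_sup"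
    by (rule compression_eigenvalue_le_rayleigh_sup[OF sym2_top_char])
  have "0 < sym2_top m11 m12 1"
    using coincidence_bounds by (simp add: sym2_top_def m11_def add_pos_nonneg)
  then have lam_K: "lam_max_op p (K_inf p) = rayleigh_sup"
    using top_le by (intro lam_max_op_K_inf) simp
  have "4 * m12\<^sup>2 = 4 * (2 * p - 1)\<^sup>2 * p * (1 - p) / (1 - q)\<^sup>2"
    using sigma_square by (simp add: m12_def q power_divide power_mult_distrib power2_eq_square)
  then show ?thesis
    using gram lam_M lam_K top_le unfolding basis q_def
    by (simp add: inner_mu_phi_phi inner_mu_phi_e_root inner_mu_e_root_e_root Mp_def Let_def
        sym2_top_def m11_def coincidence_def)
qed

end
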